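(* Let $0\le z<t\le n$ and consider any $((t,n;z))_q$ QSS scheme whose secret consists of $m$ qudits. Then for every authorized set $A\subseteq[n]$, the communication cost of secret recovery from $A$ satisfies $$\mathrm{CC}_n(A)\geq\frac{|A|\,m}{|A|-z}.$$
   Context: A QSS scheme on $n$ parties is an encoding of a quantum secret into $n$ shares, share $j$ given to party $j\in[n]$. A set $P\subseteq[n]$ is authorized if the secret can be recovered from the shares of the parties in $P$, and unauthorized if those shares contain no information about the secret. For $0\le z<t\le n$, a $((t,n;z))_q$ QSS scheme is one in which every set of at least $t$ parties is authorized, every set of at most $z$ parties is unauthorized, and the secret consists of $m$ qudits and the $j$-th share of $w_j$ qudits, all of dimension $q$. For an authorized set $A$, a fixed (a priori) portion of each share of a party in $A$ is sent to a combiner, which recovers the secret from these qudits; the communication cost is $\mathrm{CC}_n(A)=\sum_{j\in A}h_{j,A}$, where $h_{j,A}$ is the number of qudits sent by party $j$. *)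

theory Defs
  imports Complex_Main
begin

text \<open>A system of k qudits of
dimension q has Hilbert space of dimension q^k; operators on it are represented
as functions nat => nat => complex (matrix entries), required to vanish outside
the index range.  The basis index i < q^k encodes the digit string
(digit q i 0, ..., digit q i (k-1)), the digit at position p being the state of
qudit p.\<close>

type_synonym cmat = "nat \<Rightarrow> nat \<Rightarrow> complex"

definition digit :: "nat \<Rightarrow> nat \<Rightarrow> nat \<Rightarrow> nat" where
  "digit q a k = (a div q ^ k) mod q"

definition density :: "nat \<Rightarrow> cmat \<Rightarrow> bool" where
  "density d \<rho> \<longleftrightarrow>
     (\<forall>i j. \<not> (i < d \<and> j < d) \<longrightarrow> \<rho> i j = 0) \<and>
     (\<Sum>i<d. \<rho> i i) = 1 \<and>
     (\<forall>v :: nat \<Rightarrow> complex.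
        Im (\<Sum>i<d. \<Sum>j<d. cnj (v i) * \<rho> i j * v j) = 0 \<and>
        Re (\<Sum>i<d. \<Sum>j<d. cnj (v i) * \<rho> i j * v j) \<ge> 0)"

text \<open>Quantum channels (CPTP maps) in Kraus form: a finite list of Kraus
operators K (dout x din) with sum K^H K = identity.\<close>
definition is_channel :: "nat \<Rightarrow> nat \<Rightarrow> cmat list \<Rightarrow> bool" where
  "is_channel din dout Ks \<longleftrightarrow>
     (\<forall>i<din. \<forall>j<din.
        (\<Sum>K\<leftarrow>Ks. \<Sum>k<dout. cnj (K k i) * K k j) = (if i = j then 1 else 0))"

definition apply_channel :: "nat \<Rightarrow> nat \<Rightarrow> cmat list \<Rightarrow> cmat \<Rightarrow> cmat" where
  "apply_channel din dout Ks \<rho> = (\<lambda>a b.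
     if a < dout \<and> b < dout
     then (\<Sum>K\<leftarrow>Ks. \<Sum>i<din. \<Sum>j<din. K a i * \<rho> i j * cnj (K b j))
     else 0)"

text \<open>Partial trace of a W-qudit operator onto the qudit positions S
(kept in increasing order of position), tracing out the rest.\<close>
definition rank_in :: "nat set \<Rightarrow> nat \<Rightarrow> nat" where
  "rank_in S k = card {x \<in> S. x < k}"

definition merge_idx :: "nat \<Rightarrow> nat \<Rightarrow> nat set \<Rightarrow> nat \<Rightarrow> nat \<Rightarrow> nat" where
  "merge_idx q W S a c =
     (\<Sum>k<W. q ^ k * (if k \<in> S then digit q a (rank_in S k)
                        else digit q c (rank_in ({..<W} - S) k)))"

definition ptrace :: "nat \<Rightarrow> nat \<Rightarrow> nat set \<Rightarrow> cmat \<Rightarrow> cmat" where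
  "ptrace q W S \<rho> = (\<lambda>a b.
     if a < q ^ card S \<and> b < q ^ card S
     then (\<Sum>c<q ^ (W - card S). \<rho> (merge_idx q W S a c) (merge_idx q W S b c))
     else 0)"

text \<open>QSS encoding: secret of m qudits, shares j in {1..n}, share j consisting of
w j qudits; all W = sum of w j share qudits are laid out share after share.\<close>
definition total_qudits :: "nat \<Rightarrow> (nat \<Rightarrow> nat) \<Rightarrow> nat" where
  "total_qudits n w = (\<Sum>j\<in>{1..n}. w j)"

definition share_block :: "(nat \<Rightarrow> nat) \<Rightarrow> nat \<Rightarrow> nat set" where
  "share_block w j = {(\<Sum>i\<in>{1..<j}. w i) ..< (\<Sum>i\<in>{1..<j}. w i) + w j}"

definition qudits_of :: "(nat \<Rightarrow> nat) \<Rightarrow> nat set \<Rightarrow> nat set" where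
  "qudits_of w P = (\<Union>j\<in>P. share_block w j)"

definition recoverable ::
  "nat \<Rightarrow> nat \<Rightarrow> nat \<Rightarrow> (nat \<Rightarrow> nat) \<Rightarrow> cmat list \<Rightarrow> nat set \<Rightarrow> bool" where
  "recoverable q n m w Ks S \<longleftrightarrow>
     (\<exists>Rs. is_channel (q ^ card S) (q ^ m) Rs \<and>
        (\<forall>\<rho>. density (q ^ m) \<rho> \<longrightarrow>
           apply_channel (q ^ card S) (q ^ m) Rs
             (ptrace q (total_qudits n w) S
               (apply_channel (q ^ m) (q ^ total_qudits n w) Ks \<rho>)) = \<rho>))"

definition no_info ::
  "nat \<Rightarrow> nat \<Rightarrow> nat \<Rightarrow> (nat \<Rightarrow> nat) \<Rightarrow> cmat list \<Rightarrow> nat set \<Rightarrow> bool" where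
  "no_info q n m w Ks S \<longleftrightarrow>
     (\<forall>\<rho> \<sigma>. density (q ^ m) \<rho> \<longrightarrow> density (q ^ m) \<sigma> \<longrightarrow>
        ptrace q (total_qudits n w) S (apply_channel (q ^ m) (q ^ total_qudits n w) Ks \<rho>) =
        ptrace q (total_qudits n w) S (apply_channel (q ^ m) (q ^ total_qudits n w) Ks \<sigma>))"

definition authorized ::
  "nat \<Rightarrow> nat \<Rightarrow> nat \<Rightarrow> (nat \<Rightarrow> nat) \<Rightarrow> cmat list \<Rightarrow> nat set \<Rightarrow> bool" where
  "authorized q n m w Ks P \<longleftrightarrow> recoverable q n m w Ks (qudits_of w P)"

definition unauthorized ::
  "nat \<Rightarrow> nat \<Rightarrow> nat \<Rightarrow> (nat \<Rightarrow> nat) \<Rightarrow> cmat list \<Rightarrow> nat set \<Rightarrow> bool" where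
  "unauthorized q n m w Ks P \<longleftrightarrow> no_info q n m w Ks (qudits_of w P)"

definition qss_scheme ::
  "nat \<Rightarrow> nat \<Rightarrow> nat \<Rightarrow> nat \<Rightarrow> nat \<Rightarrow> (nat \<Rightarrow> nat) \<Rightarrow> cmat list \<Rightarrow> bool" where
  "qss_scheme t n z q m w Ks \<longleftrightarrow>
     is_channel (q ^ m) (q ^ total_qudits n w) Ks \<and>
     (\<forall>P \<subseteq> {1..n}. t \<le> card P \<longrightarrow> authorized q n m w Ks P) \<and>
     (\<forall>P \<subseteq> {1..n}. card P \<le> z \<longrightarrow> unauthorized q n m w Ks P)"

end

theory Submission
  imports Defs "HOL-Library.Function_Algebras"
begin

text \<open>Fix an unauthorized set \<open>Z \<subseteq> A\<close> of \<open>z\<close> parties.  The qudits sent by \<open>A\<close> split into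
those held by \<open>Z\<close>, whose reduced state is independent of the secret, and the rest \<open>Y\<close>; yet the
secret is recoverable from both together.  This forces \<open>Y\<close> to have dimension at least
\<open>q ^ m\<close>, that is, the parties of \<open>A - Z\<close> send at least \<open>m\<close> qudits.  Averaging this bound over
all \<open>z\<close>-subsets of \<open>A\<close>, each party lies outside a fraction \<open>(|A| - z) / |A|\<close> of them, which
gives the theorem.

The dimension bound is a rank count.  Let \<open>d\<close> be the secret dimension, \<open>r\<close> the dimension of
the span of the Kraus operators of the encoding (the environment), and \<open>f\<close> the dimension of the
span of their slices seen from \<open>Z\<close>.  Recoverability from \<open>ZY\<close> gives the Knill-Laflamme
conditions, so the columns of a basis of Kraus operators are \<open>r * d\<close> independent vectors living
in a space of dimension at most \<open>f * dim Y\<close>; symmetrically, blindness of \<open>Z\<close> gives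
\<open>f * d \<le> r * dim Y\<close>.  Multiplying, \<open>d \<le> dim Y\<close>.\<close>

section \<open>Complex-valued functions as a vector space\<close>

definition fun_scale :: "complex \<Rightarrow> ('a \<Rightarrow> complex) \<Rightarrow> 'a \<Rightarrow> complex" where
  "fun_scale c f = (\<lambda>x. c * f x)"

interpretation cfun: vector_space fun_scale
  by unfold_locales (auto simp: fun_scale_def fun_eq_iff algebra_simps)

interpretation cfun_pair:
  vector_space_pair "fun_scale :: complex \<Rightarrow> ('a \<Rightarrow> complex) \<Rightarrow> _"
    "fun_scale :: complex \<Rightarrow> ('b \<Rightarrow> complex) \<Rightarrow> _" ..

lemma fun_scale_apply [simp]: "fun_scale c f x = c * f x"
  by (simp add: fun_scale_def)

lemma sum_fun_apply: "(\<Sum>i\<in>A. f i) x = (\<Sum>i\<in>A. f i x)"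
  by (induction A rule: infinite_finite_induct) auto

lemma cfun_span_finite_iff:
  assumes "finite S"
  shows "v \<in> cfun.span S \<longleftrightarrow> (\<exists>u. v = (\<lambda>x. \<Sum>w\<in>S. u w * w x))"
  using cfun.span_finite[OF assms] by (auto simp: fun_eq_iff sum_fun_apply)

lemma cfun_lincomb_in_span:
  assumes "finite I" "\<And>i. i \<in> I \<Longrightarrow> v i \<in> S"
  shows "(\<lambda>x. \<Sum>i\<in>I. c i * v i x) \<in> cfun.span S"
proof -
  have "(\<lambda>x. \<Sum>i\<in>I. c i * v i x) = (\<Sum>i\<in>I. fun_scale (c i) (v i))"
    by (simp add: fun_eq_iff sum_fun_apply)
  also have "\<dots> \<in> cfun.span S"
    using assms by (intro cfun.span_sum cfun.span_scale cfun.span_base) auto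
  finally show ?thesis .
qed

lemma cfun_independent_coeff_eq_0:
  assumes "finite S" "cfun.independent S" "\<And>x. (\<Sum>w\<in>S. u w * w x) = 0" "w \<in> S"
  shows "u w = 0"
proof -
  have "(\<Sum>w\<in>S. fun_scale (u w) w) = 0"
    using assms(3) by (auto simp: fun_eq_iff sum_fun_apply)
  then show ?thesis using cfun.dependent_finite[OF assms(1)] assms(2,4) by auto
qed

lemma cfun_inj_independent_if_no_relation:
  fixes v :: "'i \<Rightarrow> 'a \<Rightarrow> complex"
  assumes fin: "finite I"
    and no_relation: "\<And>c. (\<And>x. (\<Sum>i\<in>I. c i * v i x) = 0) \<Longrightarrow> \<forall>i\<in>I. c i = 0"
  shows "inj_on v I \<and> cfun.independent (v ` I)"
proof
  show inj: "inj_on v I"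
  proof (rule inj_onI, rule ccontr)
    fix i j assume ij: "i \<in> I" "j \<in> I" "v i = v j" "i \<noteq> j"
    define c where "c k = (if k = i then 1 else if k = j then -1 else (0::complex))" for k
    have "\<forall>k\<in>I. c k = 0"
    proof (rule no_relation)
      fix x
      have "(\<Sum>k\<in>I. c k * v k x) = (\<Sum>k\<in>{i,j}. c k * v k x)"
        using ij fin by (intro sum.mono_neutral_right) (auto simp: c_def)
      also have "\<dots> = 0" using ij by (simp add: c_def)
      finally show "(\<Sum>k\<in>I. c k * v k x) = 0" .
    qed
    then show False using ij by (auto simp: c_def)
  qed
  show "cfun.independent (v ` I)"
  proof (rule cfun.independent_if_scalars_zero)
    show "finite (v ` I)" using fin by simp
    fix f w assume s: "(\<Sum>x\<in>v ` I. fun_scale (f x) x) = 0" and w: "w \<in> v ` I"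
    have "\<forall>i\<in>I. f (v i) = 0"
    proof (rule no_relation)
      fix x
      have "(\<Sum>i\<in>I. f (v i) * v i x) = (\<Sum>y\<in>v ` I. fun_scale (f y) y) x"
        using sum.reindex[OF inj, of "\<lambda>y. f y * y x"] by (simp add: sum_fun_apply)
      also have "\<dots> = 0" using s by simp
      finally show "(\<Sum>i\<in>I. f (v i) * v i x) = 0" .
    qed
    then show "f w = 0" using w by auto
  qed
qed

lemma cfun_linear_inj_on_span_onto:
  fixes L :: "('a \<Rightarrow> complex) \<Rightarrow> 'a \<Rightarrow> complex"
  assumes fin: "finite G"
    and lin: "Vector_Spaces.linear fun_scale fun_scale L"
    and into: "\<And>x. x \<in> cfun.span G \<Longrightarrow> L x \<in> cfun.span G"
    and ker: "\<And>x. x \<in> cfun.span G \<Longrightarrow> L x = 0 \<Longrightarrow> x = 0"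
    and x: "x \<in> cfun.span G"
  shows "x \<in> L ` cfun.span G"
proof -
  obtain B where B: "B \<subseteq> G" "cfun.independent B" "G \<subseteq> cfun.span B"
    using cfun.maximal_independent_subset by blast
  have finB: "finite B" using B(1) fin finite_subset by blast
  have span_B: "cfun.span B = cfun.span G"
    using B by (metis cfun.span_mono cfun.span_span subset_antisym)
  have inj: "inj_on L (cfun.span G)"
    using cfun_pair.linear_inj_on_iff_eq_0[OF lin cfun.subspace_span] ker by blast
  have indep_LB: "cfun.independent (L ` B)"
    using cfun_pair.linear_independent_injective_image[OF lin B(2)] inj span_B by simp
  have card_LB: "card (L ` B) = card B"
    using card_image inj B(1) cfun.span_superset
    by (metis (no_types, lifting) inj_on_subset order_trans)
  have L_B: "L ` B \<subseteq> cfun.span B"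
    using into B(1) cfun.span_superset span_B by blast
  have "x \<in> cfun.span (L ` B)"
  proof (rule ccontr)
    assume nx: "x \<notin> cfun.span (L ` B)"
    have indep: "cfun.independent (insert x (L ` B))"
      using cfun.independent_insertI[OF nx indep_LB] .
    have "insert x (L ` B) \<subseteq> cfun.span B"
      using L_B x span_B by auto
    then have "card (insert x (L ` B)) \<le> card B"
      using cfun.independent_span_bound[OF finB indep] by simp
    moreover have "x \<notin> L ` B" using nx cfun.span_superset by blast
    ultimately show False using card_LB finB by simp
  qed
  then show ?thesis using cfun_pair.linear_span_image[OF lin] span_B by auto
qed

definition cfun_basis :: "('a \<Rightarrow> complex) set \<Rightarrow> ('a \<Rightarrow> complex) set" where
  "cfun_basis S =
     (SOME B. B \<subseteq> S \<and> cfun.independent B \<and> S \<subseteq> cfun.span B)"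

lemma cfun_basis:
  assumes "finite S"
  shows "cfun_basis S \<subseteq> S" "cfun.independent (cfun_basis S)"
    "S \<subseteq> cfun.span (cfun_basis S)" "finite (cfun_basis S)"
proof -
  obtain B where "B \<subseteq> S" "cfun.independent B" "S \<subseteq> cfun.span B"
    by (rule cfun.maximal_independent_subset)
  then have "\<exists>B. B \<subseteq> S \<and> cfun.independent B \<and> S \<subseteq> cfun.span B"
    by blast
  then have "cfun_basis S \<subseteq> S \<and> cfun.independent (cfun_basis S) \<and> S \<subseteq> cfun.span (cfun_basis S)"
    unfolding cfun_basis_def by (rule someI_ex)
  then show "cfun_basis S \<subseteq> S" "cfun.independent (cfun_basis S)"
    "S \<subseteq> cfun.span (cfun_basis S)" by auto
  then show "finite (cfun_basis S)" using assms finite_subset by blast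
qed

section \<open>Channels in Kraus form and test states\<close>

lemma sum_list_nth: "(\<Sum>x\<leftarrow>xs. f x) = (\<Sum>k<length xs. f (xs ! k))"
  by (simp add: sum_list_sum_nth atLeast0LessThan)

lemma apply_channel_nth:
  "apply_channel din dout Ks \<rho> a b =
    (if a < dout \<and> b < dout
     then (\<Sum>k<length Ks. \<Sum>i<din. \<Sum>j<din. (Ks!k) a i * \<rho> i j * cnj ((Ks!k) b j))
     else 0)"
  by (simp add: apply_channel_def sum_list_nth)

lemma sum_rotate3:
  "(\<Sum>a\<in>A. \<Sum>b\<in>B. \<Sum>k\<in>K. G a b k) = (\<Sum>k\<in>K. \<Sum>a\<in>A. \<Sum>b\<in>B. G a b k)"
  by (subst sum.swap) (simp add: sum.swap[of _ B])

lemma apply_channel_comp: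
  assumes "x < d" "y < d"
  shows "apply_channel dN d Rs (apply_channel d dN Bs \<rho>) x y =
    (\<Sum>r<length Rs. \<Sum>k<length Bs. \<Sum>i<d. \<Sum>j<d.
       (\<Sum>a<dN. (Rs!r) x a * (Bs!k) a i) * \<rho> i j * cnj (\<Sum>b<dN. (Rs!r) y b * (Bs!k) b j))"
    (is "_ = ?rhs")
proof -
  have "apply_channel dN d Rs (apply_channel d dN Bs \<rho>) x y =
     (\<Sum>r<length Rs. \<Sum>a<dN. \<Sum>b<dN. (Rs!r) x a *
        (\<Sum>k<length Bs. \<Sum>i<d. \<Sum>j<d. (Bs!k) a i * \<rho> i j * cnj ((Bs!k) b j)) * cnj ((Rs!r) y b))"
    using assms by (simp add: apply_channel_nth)
  also have "\<dots> = (\<Sum>r<length Rs. \<Sum>a<dN. \<Sum>b<dN. \<Sum>k<length Bs. \<Sum>i<d. \<Sum>j<d.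
        (Rs!r) x a * (Bs!k) a i * \<rho> i j * (cnj ((Rs!r) y b) * cnj ((Bs!k) b j)))"
    by (simp only: sum_distrib_left sum_distrib_right) (intro sum.cong refl, simp add: mult_ac)
  also have "\<dots> = (\<Sum>r<length Rs. \<Sum>k<length Bs. \<Sum>i<d. \<Sum>j<d. \<Sum>a<dN. \<Sum>b<dN.
        (Rs!r) x a * (Bs!k) a i * \<rho> i j * (cnj ((Rs!r) y b) * cnj ((Bs!k) b j)))"
    by (simp only: sum_rotate3[where A = "{..<dN}" and B = "{..<dN}"])
  also have "\<dots> = ?rhs"
    by (simp only: cnj_sum complex_cnj_mult sum_distrib_left sum_distrib_right mult_ac)
  finally show ?thesis .
qed

definition pure_state :: "nat \<Rightarrow> real \<Rightarrow> (nat \<Rightarrow> complex) \<Rightarrow> cmat" where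
  "pure_state d c \<psi> = (\<lambda>i j. if i < d \<and> j < d then of_real c * \<psi> i * cnj (\<psi> j) else 0)"

definition ket :: "nat \<Rightarrow> nat \<Rightarrow> complex" where
  "ket p = (\<lambda>i. if i = p then 1 else 0)"

lemma cnj_ket [simp]: "cnj (ket p i) = ket p i"
  by (simp add: ket_def)

lemma sum_ket:
  assumes "p < d"
  shows "(\<Sum>i<d. ket p i * G i) = G p"
proof -
  have "(\<Sum>i<d. ket p i * G i) = (\<Sum>i<d. if i = p then G i else 0)"
    by (intro sum.cong) (auto simp: ket_def)
  then show ?thesis using assms by simp
qed

lemma density_pure_state:
  assumes c: "c \<ge> 0" and trace: "(\<Sum>i<d. of_real c * \<psi> i * cnj (\<psi> i)) = 1"
  shows "density d (pure_state d c \<psi>)"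
  unfolding density_def
proof (intro conjI allI impI)
  show "(\<Sum>i<d. pure_state d c \<psi> i i) = 1"
    using trace by (simp add: pure_state_def)
  fix v :: "nat \<Rightarrow> complex"
  define w where "w = (\<Sum>i<d. cnj (v i) * \<psi> i)"
  have "(\<Sum>i<d. \<Sum>j<d. cnj (v i) * pure_state d c \<psi> i j * v j) = of_real c * (w * cnj w)"
    unfolding w_def pure_state_def
    by (simp add: sum_distrib_left sum_distrib_right mult_ac) (rule sum.swap)
  also have "\<dots> = of_real (c * (norm w)^2)"
    by (simp add: complex_norm_square[symmetric] del: of_real_power)
  finally have form: "(\<Sum>i<d. \<Sum>j<d. cnj (v i) * pure_state d c \<psi> i j * v j) = of_real (c * (norm w)^2)" .
  show "Im (\<Sum>i<d. \<Sum>j<d. cnj (v i) * pure_state d c \<psi> i j * v j) = 0"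
    unfolding form by simp
  show "0 \<le> Re (\<Sum>i<d. \<Sum>j<d. cnj (v i) * pure_state d c \<psi> i j * v j)"
    unfolding form using c by simp
qed (auto simp: pure_state_def)

lemma density_ket_state:
  assumes "p < d"
  shows "density d (pure_state d 1 (ket p))"
proof (rule density_pure_state)
  show "(\<Sum>i<d. of_real 1 * ket p i * cnj (ket p i)) = 1"
    using sum_ket[OF assms, of "ket p"] by simp (simp add: ket_def)
qed simp

lemma density_superposition:
  assumes "p < d" "p' < d" "p \<noteq> p'" "cnj \<alpha> * \<alpha> = 1"
  shows "density d (pure_state d (1/2) (\<lambda>i. ket p i + \<alpha> * ket p' i))"
proof (rule density_pure_state)
  have "(\<Sum>i<d. of_real (1/2) * (ket p i + \<alpha> * ket p' i) * cnj (ket p i + \<alpha> * ket p' i))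
     = (\<Sum>i\<in>{p,p'}. of_real (1/2) * (ket p i + \<alpha> * ket p' i) * cnj (ket p i + \<alpha> * ket p' i))"
    using assms by (intro sum.mono_neutral_right) (auto simp: ket_def)
  also have "\<dots> = 1" using assms by (simp add: ket_def mult_ac)
  finally show "(\<Sum>i<d. of_real (1/2) * (ket p i + \<alpha> * ket p' i) * cnj (ket p i + \<alpha> * ket p' i)) = 1" .
qed simp

lemma pair_ket_state:
  assumes "p < d"
  shows "(\<Sum>i<d. \<Sum>j<d. F i j * pure_state d 1 (ket p) i j) = F p p"
proof -
  have "(\<Sum>i<d. \<Sum>j<d. F i j * pure_state d 1 (ket p) i j) = (\<Sum>i<d. \<Sum>j<d. ket p i * (ket p j * F i j))"
    by (intro sum.cong refl) (auto simp: pure_state_def algebra_simps)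
  also have "\<dots> = F p p" using assms by (simp add: sum_distrib_left[symmetric] sum_ket)
  finally show ?thesis .
qed

lemma pair_superposition:
  assumes "p < d" "p' < d"
  shows "(\<Sum>i<d. \<Sum>j<d. F i j * pure_state d c (\<lambda>i. ket p i + \<alpha> * ket p' i) i j)
     = of_real c * (F p p + cnj \<alpha> * F p p' + \<alpha> * F p' p + \<alpha> * cnj \<alpha> * F p' p')"
proof -
  have "(\<Sum>i<d. \<Sum>j<d. F i j * pure_state d c (\<lambda>i. ket p i + \<alpha> * ket p' i) i j)
    = (\<Sum>i<d. \<Sum>j<d. of_real c * (ket p i * (ket p j * F i j) + cnj \<alpha> * (ket p i * (ket p' j * F i j))
          + \<alpha> * (ket p' i * (ket p j * F i j)) + \<alpha> * cnj \<alpha> * (ket p' i * (ket p' j * F i j))))"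
    by (intro sum.cong refl) (auto simp: pure_state_def algebra_simps)
  also have "\<dots> = of_real c * (F p p + cnj \<alpha> * F p p' + \<alpha> * F p' p + \<alpha> * cnj \<alpha> * F p' p')"
    using assms by (simp add: sum.distrib sum_distrib_left[symmetric] sum_ket)
  finally show ?thesis .
qed

lemma sum_mult_cnj_eq_0D:
  fixes z :: "'i \<Rightarrow> complex"
  assumes "finite I" "(\<Sum>i\<in>I. z i * cnj (z i)) = 0" "i \<in> I"
  shows "z i = 0"
proof -
  have "(\<Sum>i\<in>I. z i * cnj (z i)) = of_real (\<Sum>i\<in>I. (norm (z i))^2)"
    by (simp add: complex_norm_square[symmetric] del: of_real_power)
  then have "(\<Sum>i\<in>I. (norm (z i))^2) = 0" using assms(2) by (metis of_real_eq_0_iff)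
  then show ?thesis using assms(1,3) sum_nonneg_eq_0_iff[of I "\<lambda>i. (norm (z i))^2"] by auto
qed

section \<open>A blind part forces a large complement\<close>

text \<open>The output basis of the encoding \<open>Bs\<close> is indexed, via \<open>g\<close>, by pairs \<open>(z, y)\<close>:
\<open>z\<close> for the blind part \<open>Z\<close>, \<open>y\<close> for its complement \<open>Y\<close>.\<close>

locale blind_part_recovery =
  fixes d dN dZ dY :: nat and g :: "nat \<times> nat \<Rightarrow> nat" and Bs Rs :: "cmat list"
  assumes d_pos: "0 < d"
    and g_bij: "bij_betw g ({..<dZ} \<times> {..<dY}) {..<dN}"
    and recovery_channel: "is_channel dN d Rs"
    and recovers: "\<And>\<rho>. density d \<rho> \<Longrightarrow> apply_channel dN d Rs (apply_channel d dN Bs \<rho>) = \<rho>"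
    and Z_blind: "\<And>\<rho> \<rho>' a b. density d \<rho> \<Longrightarrow> density d \<rho>' \<Longrightarrow> a < dZ \<Longrightarrow> b < dZ \<Longrightarrow>
       (\<Sum>y<dY. apply_channel d dN Bs \<rho> (g (a,y)) (g (b,y))) =
       (\<Sum>y<dY. apply_channel d dN Bs \<rho>' (g (a,y)) (g (b,y)))"
begin

abbreviation nR where "nR \<equiv> length Rs"
abbreviation nB where "nB \<equiv> length Bs"

abbreviation ket_state :: "nat \<Rightarrow> cmat" where
  "ket_state p \<equiv> pure_state d 1 (ket p)"

abbreviation superposition :: "nat \<Rightarrow> nat \<Rightarrow> complex \<Rightarrow> cmat" where
  "superposition p p' \<alpha> \<equiv> pure_state d (1/2) (\<lambda>i. ket p i + \<alpha> * ket p' i)"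

lemma g_less: "z < dZ \<Longrightarrow> y < dY \<Longrightarrow> g (z,y) < dN"
  using g_bij unfolding bij_betw_def by auto

definition g_inv where "g_inv = the_inv_into ({..<dZ} \<times> {..<dY}) g"

lemma g_inv:
  assumes "a < dN"
  shows "fst (g_inv a) < dZ" "snd (g_inv a) < dY" "g (fst (g_inv a), snd (g_inv a)) = a"
proof -
  have "g_inv a \<in> {..<dZ} \<times> {..<dY}"
    unfolding g_inv_def using g_bij assms
    by (metis bij_betw_def lessThan_iff the_inv_into_into subset_refl)
  then show "fst (g_inv a) < dZ" "snd (g_inv a) < dY" by auto
  have "g (g_inv a) = a" unfolding g_inv_def using g_bij assms
    by (metis bij_betw_def lessThan_iff f_the_inv_into_f)
  then show "g (fst (g_inv a), snd (g_inv a)) = a" by simp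
qed

subsection \<open>Recovery: the Knill-Laflamme conditions\<close>

definition RB where "RB r k i j = (\<Sum>a<dN. (Rs!r) i a * (Bs!k) a j)"

lemma RB_recovers:
  assumes "density d \<rho>" "x < d" "y < d"
  shows "(\<Sum>r<nR. \<Sum>k<nB. \<Sum>i<d. \<Sum>j<d. (RB r k x i * cnj (RB r k y j)) * \<rho> i j) = \<rho> x y"
proof -
  have "\<rho> x y = apply_channel dN d Rs (apply_channel d dN Bs \<rho>) x y"
    using recovers[OF assms(1)] by simp
  also have "\<dots> = (\<Sum>r<nR. \<Sum>k<nB. \<Sum>i<d. \<Sum>j<d. RB r k x i * \<rho> i j * cnj (RB r k y j))"
    unfolding apply_channel_comp[OF assms(2,3)] RB_def ..
  finally show ?thesis by (simp add: mult_ac)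
qed

lemma RB_ket:
  assumes "p < d" "x < d" "y < d"
  shows "(\<Sum>r<nR. \<Sum>k<nB. RB r k x p * cnj (RB r k y p)) = ket_state p x y"
  using RB_recovers[OF density_ket_state[OF assms(1)] assms(2,3)]
  by (simp only: pair_ket_state[OF assms(1)])

lemma RB_superposition:
  assumes "p < d" "p' < d" "p \<noteq> p'" "cnj \<alpha> * \<alpha> = 1" "x < d" "y < d"
  shows "(\<Sum>r<nR. \<Sum>k<nB. of_real (1/2) *
      (RB r k x p * cnj (RB r k y p) + cnj \<alpha> * (RB r k x p * cnj (RB r k y p'))
      + \<alpha> * (RB r k x p' * cnj (RB r k y p)) + \<alpha> * cnj \<alpha> * (RB r k x p' * cnj (RB r k y p'))))
    = superposition p p' \<alpha> x y"
  using RB_recovers[OF density_superposition[OF assms(1-4)] assms(5,6)]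
  by (simp only: pair_superposition[OF assms(1,2)])

lemma RB_offdiag:
  assumes "r < nR" "k < nB" "x < d" "p < d" "x \<noteq> p"
  shows "RB r k x p = 0"
proof -
  have "ket_state p x x = 0" using assms by (simp add: pure_state_def ket_def)
  then have "(\<Sum>(r,k)\<in>{..<nR}\<times>{..<nB}. RB r k x p * cnj (RB r k x p)) = 0"
    using RB_ket[OF assms(4,3,3)] by (simp add: sum.cartesian_product)
  then show ?thesis
    using sum_mult_cnj_eq_0D[of "{..<nR}\<times>{..<nB}" "\<lambda>(r,k). RB r k x p" "(r,k)"] assms
    by (simp add: case_prod_unfold)
qed

lemma RB_norm_diag:
  assumes "p < d"
  shows "(\<Sum>r<nR. \<Sum>k<nB. RB r k p p * cnj (RB r k p p)) = 1"
  using RB_ket[OF assms assms assms] assms by (simp add: pure_state_def ket_def)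

lemma RB_inner_diag:
  assumes "p < d"
  shows "(\<Sum>r<nR. \<Sum>k<nB. RB r k p p * cnj (RB r k 0 0)) = 1"
proof (cases "p = 0")
  case False
  have "(\<Sum>r<nR. \<Sum>k<nB. of_real (1/2) * (RB r k p p * cnj (RB r k 0 p)
      + cnj 1 * (RB r k p p * cnj (RB r k 0 0)) + 1 * (RB r k p 0 * cnj (RB r k 0 p))
      + 1 * cnj 1 * (RB r k p 0 * cnj (RB r k 0 0)))) = superposition p 0 1 p 0"
    using RB_superposition[OF assms d_pos False _ assms d_pos, of 1] by simp
  moreover have "superposition p 0 1 p 0 = 1/2"
    using assms False by (simp add: pure_state_def ket_def)
  moreover have "RB r k 0 p = 0 \<and> RB r k p 0 = 0" if "r < nR" "k < nB" for r k
    using RB_offdiag False assms d_pos that by auto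
  ultimately have "of_real (1/2) * (\<Sum>r<nR. \<Sum>k<nB. RB r k p p * cnj (RB r k 0 0)) = 1/2"
    by (simp add: sum_distrib_left)
  then show ?thesis by simp
qed (use RB_norm_diag[OF d_pos] in simp)

lemma RB_diag:
  assumes "r < nR" "k < nB" "p < d"
  shows "RB r k p p = RB r k 0 0"
proof -
  have cross: "(\<Sum>r<nR. \<Sum>k<nB. RB r k 0 0 * cnj (RB r k p p)) = 1"
    using arg_cong[OF RB_inner_diag[OF assms(3)], of cnj] by (simp add: mult.commute)
  have "(\<Sum>r<nR. \<Sum>k<nB. (RB r k p p - RB r k 0 0) * cnj (RB r k p p - RB r k 0 0)) =
     (\<Sum>r<nR. \<Sum>k<nB. RB r k p p * cnj (RB r k p p)) + (\<Sum>r<nR. \<Sum>k<nB. RB r k 0 0 * cnj (RB r k 0 0))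
     - (\<Sum>r<nR. \<Sum>k<nB. RB r k p p * cnj (RB r k 0 0)) - (\<Sum>r<nR. \<Sum>k<nB. RB r k 0 0 * cnj (RB r k p p))"
    by (simp add: algebra_simps sum.distrib sum_subtractf)
  also have "\<dots> = 0"
    using RB_norm_diag[OF assms(3)] RB_norm_diag[OF d_pos] RB_inner_diag[OF assms(3)] cross by simp
  finally have "(\<Sum>(r,k)\<in>{..<nR}\<times>{..<nB}. (RB r k p p - RB r k 0 0) * cnj (RB r k p p - RB r k 0 0)) = 0"
    by (simp only: sum.cartesian_product)
  then show ?thesis
    using sum_mult_cnj_eq_0D[of "{..<nR}\<times>{..<nB}" "\<lambda>(r,k). RB r k p p - RB r k 0 0" "(r,k)"] assms
    by (simp add: case_prod_unfold)
qed

lemma RB_scalar: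
  assumes "r < nR" "k < nB" "i < d" "j < d"
  shows "RB r k i j = (if i = j then RB r k 0 0 else 0)"
  using RB_diag[OF assms(1,2,3)] RB_offdiag[OF assms(1,2,3,4)] by (cases "i = j") simp_all

lemma recovery_complete:
  "a < dN \<Longrightarrow> b < dN \<Longrightarrow>
   (\<Sum>r<nR. \<Sum>x<d. cnj ((Rs!r) x a) * (Rs!r) x b) = (if a = b then 1 else 0)"
  using recovery_channel unfolding is_channel_def sum_list_nth by auto

lemma kraus_inner_through_recovery:
  "(\<Sum>a<dN. cnj ((Bs!k) a i) * (Bs!k') a j) = (\<Sum>r<nR. \<Sum>x<d. cnj (RB r k x i) * RB r k' x j)"
proof -
  have "(\<Sum>a<dN. cnj ((Bs!k) a i) * (Bs!k') a j) =
      (\<Sum>a<dN. \<Sum>b<dN. cnj ((Bs!k) a i) * (if a = b then 1 else 0) * (Bs!k') b j)"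
    by (intro sum.cong refl) (simp add: if_distrib[of "\<lambda>x. _ * x * _"] cong: if_cong)
  also have "\<dots> = (\<Sum>a<dN. \<Sum>b<dN. \<Sum>r<nR. \<Sum>x<d.
      cnj ((Bs!k) a i) * (cnj ((Rs!r) x a) * (Rs!r) x b) * (Bs!k') b j)"
    by (intro sum.cong refl) (simp add: recovery_complete[symmetric] sum_distrib_left sum_distrib_right)
  also have "\<dots> = (\<Sum>r<nR. \<Sum>x<d. \<Sum>a<dN. \<Sum>b<dN.
      cnj ((Bs!k) a i) * (cnj ((Rs!r) x a) * (Rs!r) x b) * (Bs!k') b j)"
    by (subst sum_rotate3) (intro sum.cong refl sum_rotate3)
  also have "\<dots> = (\<Sum>r<nR. \<Sum>x<d. cnj (RB r k x i) * RB r k' x j)"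
    unfolding RB_def cnj_sum complex_cnj_mult sum_product
    by (intro sum.cong refl) (simp add: mult_ac)
  finally show ?thesis .
qed

lemma knill_laflamme:
  assumes "k < nB" "k' < nB" "i < d" "j < d"
  shows "(\<Sum>a<dN. cnj ((Bs!k) a i) * (Bs!k') a j) =
    (if i = j then (\<Sum>r<nR. cnj (RB r k 0 0) * RB r k' 0 0) else 0)"
proof -
  have "(\<Sum>r<nR. \<Sum>x<d. cnj (RB r k x i) * RB r k' x j) =
      (\<Sum>r<nR. \<Sum>x<d. if x = i \<and> x = j then cnj (RB r k 0 0) * RB r k' 0 0 else 0)"
    using RB_scalar[of _ k _ i] RB_scalar[of _ k' _ j] assms by (intro sum.cong refl) simp
  then show ?thesis
    using assms by (cases "i = j") (auto simp: kraus_inner_through_recovery intro!: sum.neutral)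
qed

text \<open>\<open>Zmarg i j\<close> is the reduced state on the \<open>z\<close>-part of the encoding of \<open>|i\<rangle>\<langle>j|\<close>.\<close>

definition Zmarg where "Zmarg i j a b = (\<Sum>y<dY. \<Sum>k<nB. (Bs!k) (g (a,y)) i * cnj ((Bs!k) (g (b,y)) j))"

lemma Z_marginal_eq_Zmarg:
  assumes "a < dZ" "b < dZ"
  shows "(\<Sum>y<dY. apply_channel d dN Bs \<rho> (g (a,y)) (g (b,y))) = (\<Sum>i<d. \<Sum>j<d. Zmarg i j a b * \<rho> i j)"
proof -
  have "(\<Sum>y<dY. apply_channel d dN Bs \<rho> (g (a,y)) (g (b,y))) =
     (\<Sum>y<dY. \<Sum>k<nB. \<Sum>i<d. \<Sum>j<d. (Bs!k) (g (a,y)) i * \<rho> i j * cnj ((Bs!k) (g (b,y)) j))"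
    using assms g_less by (intro sum.cong refl) (simp add: apply_channel_nth)
  also have "\<dots> = (\<Sum>i<d. \<Sum>j<d. \<Sum>y<dY. \<Sum>k<nB. (Bs!k) (g (a,y)) i * \<rho> i j * cnj ((Bs!k) (g (b,y)) j))"
    by (subst sum_rotate3) (intro sum.cong refl sum_rotate3)
  also have "\<dots> = (\<Sum>i<d. \<Sum>j<d. Zmarg i j a b * \<rho> i j)"
    unfolding Zmarg_def by (simp add: sum_distrib_left mult_ac)
  finally show ?thesis .
qed

lemma Zmarg_pair_eq:
  assumes "density d \<rho>" "density d \<rho>'" "a < dZ" "b < dZ"
  shows "(\<Sum>i<d. \<Sum>j<d. Zmarg i j a b * \<rho> i j) = (\<Sum>i<d. \<Sum>j<d. Zmarg i j a b * \<rho>' i j)"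
  using Z_blind[OF assms] Z_marginal_eq_Zmarg[OF assms(3,4)] by simp

lemma Zmarg_diag:
  assumes "p < d" "a < dZ" "b < dZ"
  shows "Zmarg p p a b = Zmarg 0 0 a b"
proof -
  have "Zmarg p p a b = (\<Sum>i<d. \<Sum>j<d. Zmarg i j a b * ket_state p i j)"
    by (rule pair_ket_state[OF assms(1), symmetric])
  also have "\<dots> = (\<Sum>i<d. \<Sum>j<d. Zmarg i j a b * ket_state 0 i j)"
    by (rule Zmarg_pair_eq[OF density_ket_state[OF assms(1)] density_ket_state[OF d_pos] assms(2,3)])
  also have "\<dots> = Zmarg 0 0 a b"
    by (rule pair_ket_state[OF d_pos])
  finally show ?thesis .
qed

lemma Zmarg_offdiag:
  assumes "p < d" "p' < d" "p \<noteq> p'" "a < dZ" "b < dZ"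
  shows "Zmarg p p' a b = 0"
proof -
  have two: "of_real (1/2) * (Zmarg p p a b + cnj \<alpha> * Zmarg p p' a b + \<alpha> * Zmarg p' p a b + \<alpha> * cnj \<alpha> * Zmarg p' p' a b) = Zmarg 0 0 a b"
    if al: "cnj \<alpha> * \<alpha> = 1" for \<alpha>
  proof -
    have "of_real (1/2) * (Zmarg p p a b + cnj \<alpha> * Zmarg p p' a b + \<alpha> * Zmarg p' p a b + \<alpha> * cnj \<alpha> * Zmarg p' p' a b)
       = (\<Sum>i<d. \<Sum>j<d. Zmarg i j a b * superposition p p' \<alpha> i j)"
      by (rule pair_superposition[OF assms(1,2), symmetric])
    also have "\<dots> = (\<Sum>i<d. \<Sum>j<d. Zmarg i j a b * ket_state 0 i j)"
      by (rule Zmarg_pair_eq[OF density_superposition[OF assms(1-3) al] density_ket_state[OF d_pos] assms(4,5)])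
    also have "\<dots> = Zmarg 0 0 a b"
      by (rule pair_ket_state[OF d_pos])
    finally show ?thesis .
  qed
  \<comment> \<open>the phases \<open>1\<close> and \<open>\<i>\<close> isolate the symmetric and antisymmetric off-diagonal parts\<close>
  have pp: "Zmarg p p a b = Zmarg 0 0 a b" "Zmarg p' p' a b = Zmarg 0 0 a b"
    using Zmarg_diag[OF assms(1,4,5)] Zmarg_diag[OF assms(2,4,5)] by auto
  have "Zmarg p p' a b / 2 + Zmarg p' p a b / 2 = 0"
    using two[of 1] pp by (simp add: algebra_simps)
  then have sum: "Zmarg p p' a b + Zmarg p' p a b = 0"
    by (simp add: add_divide_distrib[symmetric])
  have "\<i> * (Zmarg p' p a b - Zmarg p p' a b) = 0"
    using two[of "\<i>"] pp by (simp add: algebra_simps)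
  with sum show ?thesis by simp
qed

lemma Zmarg_delta:
  assumes "i < d" "j < d" "a < dZ" "b < dZ"
  shows "Zmarg i j a b = (if i = j then Zmarg 0 0 a b else 0)"
  using Zmarg_diag[OF assms(1,3,4)] Zmarg_offdiag[OF assms(1,2) _ assms(3,4)] by (cases "i = j") simp_all

definition kraus_vec :: "nat \<Rightarrow> nat \<times> nat \<Rightarrow> complex" where
  "kraus_vec k = (\<lambda>(a,i). if a < dN \<and> i < d then (Bs!k) a i else 0)"

definition Kraus where "Kraus = kraus_vec ` {..<nB}"

definition col_inner :: "(nat \<times> nat \<Rightarrow> complex) \<Rightarrow> (nat \<times> nat \<Rightarrow> complex) \<Rightarrow> nat \<Rightarrow> nat \<Rightarrow> complex" where
  "col_inner X Y i j = (\<Sum>a<dN. cnj (X (a,i)) * Y (a,j))"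

lemma finite_Kraus: "finite Kraus" unfolding Kraus_def by simp

lemma col_inner_Kraus:
  assumes "w \<in> Kraus" "w' \<in> Kraus" "i < d" "j < d"
  shows "col_inner w w' i j = (if i = j then col_inner w w' 0 0 else 0)"
proof -
  obtain k k' where k: "k < nB" "k' < nB" "w = kraus_vec k" "w' = kraus_vec k'" using assms Kraus_def by auto
  have "col_inner w w' i j = (\<Sum>a<dN. cnj ((Bs!k) a i) * (Bs!k') a j)"
    using assms k unfolding col_inner_def kraus_vec_def by (intro sum.cong) auto
  moreover have "col_inner w w' 0 0 = (\<Sum>a<dN. cnj ((Bs!k) a 0) * (Bs!k') a 0)"
    using d_pos k unfolding col_inner_def kraus_vec_def by (intro sum.cong) auto
  ultimately show ?thesis using knill_laflamme[OF k(1,2) assms(3,4)] knill_laflamme[OF k(1,2) d_pos d_pos] by simp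
qed

lemma col_inner_lincomb:
  assumes "finite G"
  shows "col_inner (\<lambda>x. \<Sum>w\<in>G. u w * w x) (\<lambda>x. \<Sum>w\<in>G. u' w * w x) i j
     = (\<Sum>w\<in>G. \<Sum>w'\<in>G. cnj (u w) * u' w' * col_inner w w' i j)"
proof -
  have "col_inner (\<lambda>x. \<Sum>w\<in>G. u w * w x) (\<lambda>x. \<Sum>w\<in>G. u' w * w x) i j
     = (\<Sum>a<dN. \<Sum>w\<in>G. \<Sum>w'\<in>G. cnj (u w) * u' w' * (cnj (w (a,i)) * w' (a,j)))"
    unfolding col_inner_def cnj_sum complex_cnj_mult sum_product
    by (intro sum.cong refl) (simp add: mult_ac)
  also have "\<dots> = (\<Sum>w\<in>G. \<Sum>w'\<in>G. \<Sum>a<dN. cnj (u w) * u' w' * (cnj (w (a,i)) * w' (a,j)))"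
    by (subst sum.swap) (intro sum.cong refl sum.swap)
  also have "\<dots> = (\<Sum>w\<in>G. \<Sum>w'\<in>G. cnj (u w) * u' w' * col_inner w w' i j)"
    unfolding col_inner_def by (simp add: sum_distrib_left)
  finally show ?thesis .
qed

lemma col_inner_span:
  assumes "X \<in> cfun.span Kraus" "Y \<in> cfun.span Kraus" "i < d" "j < d"
  shows "col_inner X Y i j = (if i = j then col_inner X Y 0 0 else 0)"
proof -
  obtain u where u1: "X = (\<lambda>x. \<Sum>w\<in>Kraus. u w * w x)"
    using assms(1) unfolding cfun_span_finite_iff[OF finite_Kraus] by blast
  obtain u' where u2: "Y = (\<lambda>x. \<Sum>w\<in>Kraus. u' w * w x)"
    using assms(2) unfolding cfun_span_finite_iff[OF finite_Kraus] by blast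
  note u = u1 u2
  have "col_inner X Y i j = (\<Sum>w\<in>Kraus. \<Sum>w'\<in>Kraus. cnj (u w) * u' w' * col_inner w w' i j)"
    unfolding u by (rule col_inner_lincomb[OF finite_Kraus])
  also have "\<dots> = (\<Sum>w\<in>Kraus. \<Sum>w'\<in>Kraus. cnj (u w) * u' w' * (if i = j then col_inner w w' 0 0 else 0))"
  proof (intro sum.cong refl)
    fix w w' assume "w \<in> Kraus" "w' \<in> Kraus"
    then show "cnj (u w) * u' w' * col_inner w w' i j = cnj (u w) * u' w' * (if i = j then col_inner w w' 0 0 else 0)"
      using col_inner_Kraus[of w w' i j] assms by simp
  qed
  also have "\<dots> = (if i = j then col_inner X Y 0 0 else 0)"
    unfolding u col_inner_lincomb[OF finite_Kraus] by (cases "i = j") auto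
  finally show ?thesis .
qed

lemma span_Kraus_vanish:
  assumes w: "w \<in> cfun.span Kraus" and ai: "\<not> (a < dN \<and> i < d)"
  shows "w (a,i) = 0"
proof -
  obtain u where "w = (\<lambda>x. \<Sum>v\<in>Kraus. u v * v x)" using w unfolding cfun_span_finite_iff[OF finite_Kraus] by blast
  moreover have "\<And>v. v \<in> Kraus \<Longrightarrow> v (a,i) = 0" using ai unfolding Kraus_def kraus_vec_def by auto
  ultimately show ?thesis by (auto intro!: sum.neutral)
qed

lemma span_Kraus_eq_0:
  assumes "X \<in> cfun.span Kraus" "\<And>i. i < d \<Longrightarrow> col_inner X X i i = 0"
  shows "X = 0"
proof
  fix x :: "nat \<times> nat"
  obtain a i where x: "x = (a,i)" by fastforce
  show "X x = 0 x"
  proof (cases "a < dN \<and> i < d")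
    case True
    have "(\<Sum>a<dN. X (a,i) * cnj (X (a,i))) = 0"
      using assms(2)[of i] True unfolding col_inner_def by (simp add: mult.commute)
    then have "X (a,i) = 0" using sum_mult_cnj_eq_0D[of "{..<dN}" "\<lambda>a. X (a,i)" a] True by simp
    then show ?thesis using x by simp
  next
    case False
    then show ?thesis using span_Kraus_vanish[OF assms(1)] x by simp
  qed
qed

abbreviation KB where "KB \<equiv> cfun_basis Kraus"

lemmas KB = cfun_basis[OF finite_Kraus]

lemma span_Kraus_diagonal_sum_eq_0D:
  assumes X: "\<And>i. X i \<in> cfun.span Kraus" and sum0: "\<And>a. (\<Sum>i<d. X i (a,i)) = 0" and j: "j < d"
  shows "X j = 0"
proof (rule span_Kraus_eq_0[OF X])
  have "0 = (\<Sum>a<dN. cnj (X j (a,j)) * (\<Sum>i<d. X i (a,i)))" using sum0 by simp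
  also have "\<dots> = (\<Sum>i<d. col_inner (X j) (X i) j i)"
    unfolding col_inner_def by (simp add: sum_distrib_left) (rule sum.swap)
  also have "\<dots> = (\<Sum>i<d. if j = i then col_inner (X j) (X i) j i else 0)"
    using col_inner_span[OF X X j] by (intro sum.cong refl) auto
  also have "\<dots> = col_inner (X j) (X j) j j" using j by simp
  finally have "col_inner (X j) (X j) j j = 0" by simp
  moreover fix i assume "i < d"
  then have "col_inner (X j) (X j) i i = col_inner (X j) (X j) j j"
    using col_inner_span[OF X X _ _] j by (metis (full_types))
  ultimately show "col_inner (X j) (X j) i i = 0" by simp
qed

lemma KB_columns_independent:
  "inj_on (\<lambda>(b,i). \<lambda>a. b (a,i)) (KB \<times> {..<d}) \<and>
   cfun.independent ((\<lambda>(b,i). \<lambda>a. b (a,i)) ` (KB \<times> {..<d}))"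
proof (rule cfun_inj_independent_if_no_relation)
  show "finite (KB \<times> {..<d})" using KB(4) by simp
  fix c :: "(nat \<times> nat \<Rightarrow> complex) \<times> nat \<Rightarrow> complex"
  assume rel: "\<And>x. (\<Sum>p\<in>KB \<times> {..<d}. c p * (case p of (b, i) \<Rightarrow> \<lambda>a. b (a, i)) x) = 0"
  define X where "X i = (\<lambda>x. \<Sum>b\<in>KB. c (b,i) * b x)" for i
  have X: "X i \<in> cfun.span Kraus" for i
    unfolding X_def using KB(1) by (intro cfun_lincomb_in_span KB(4)) auto
  have diagonal_sum: "(\<Sum>i<d. X i (a,i)) = 0" for a
  proof -
    have "(\<Sum>i<d. X i (a,i)) = (\<Sum>b\<in>KB. \<Sum>i<d. c (b,i) * b (a,i))"
      unfolding X_def by (simp add: sum.swap[of _ "{..<d}"])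
    also have "\<dots> = (\<Sum>p\<in>KB \<times> {..<d}. c p * (case p of (b, i) \<Rightarrow> \<lambda>a. b (a, i)) a)"
      by (simp add: sum.cartesian_product case_prod_unfold)
    finally show ?thesis using rel by simp
  qed
  have X0: "X j = 0" if "j < d" for j
    using span_Kraus_diagonal_sum_eq_0D[of X, OF X diagonal_sum that] .
  show "\<forall>p\<in>KB \<times> {..<d}. c p = 0"
  proof
    fix p assume "p \<in> KB \<times> {..<d}"
    then obtain b j where bj: "p = (b,j)" "b \<in> KB" "j < d" by auto
    have "(\<Sum>b\<in>KB. c (b,j) * b x) = 0" for x
      using fun_cong[OF X0[OF bj(3)], of x] unfolding X_def by simp
    then show "c p = 0"
      using cfun_independent_coeff_eq_0[OF KB(4,2), of "\<lambda>b. c (b,j)"] bj by blast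
  qed
qed

lemma card_KB_columns: "card ((\<lambda>(b,i). \<lambda>a. b (a,i)) ` (KB \<times> {..<d})) = card KB * d"
  using KB_columns_independent by (simp add: card_image card_cartesian_product)

text \<open>\<open>slice k y i\<close> is column \<open>i\<close> of the \<open>k\<close>-th Kraus operator on the fibre \<open>y\<close>, as a function
of \<open>z\<close>; the span of all slices has dimension \<open>card SB\<close>, the \<open>f\<close> of the proof idea, while
\<open>card KB\<close> is its \<open>r\<close>.\<close>

definition slice where "slice k y i = (\<lambda>z::nat. if z < dZ then (Bs!k) (g (z,y)) i else 0)"
definition Slices where "Slices = (\<lambda>(k,y,i). slice k y i) ` ({..<nB} \<times> {..<dY} \<times> {..<d})"

lemma finite_Slices: "finite Slices"
  unfolding Slices_def by simp

abbreviation SB where "SB \<equiv> cfun_basis Slices"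

lemmas SB = cfun_basis[OF finite_Slices]

definition lift :: "(nat \<Rightarrow> complex) \<Rightarrow> nat \<Rightarrow> nat \<Rightarrow> complex" where
  "lift f y = (\<lambda>a. if a < dN then (if snd (g_inv a) = y then f (fst (g_inv a)) else 0) else 0)"

definition Lifted where "Lifted = (\<lambda>(f,y). lift f y) ` (SB \<times> {..<dY})"

lemma finite_Lifted: "finite Lifted" unfolding Lifted_def using SB(4) by simp

lemma card_Lifted: "card Lifted \<le> card SB * dY"
  unfolding Lifted_def using card_image_le[of "SB \<times> {..<dY}" "\<lambda>(f,y). lift f y"] SB(4)
  by (simp add: card_cartesian_product)

lemma lift_in_span: "y < dY \<Longrightarrow> f \<in> cfun.span SB \<Longrightarrow> lift f y \<in> cfun.span Lifted"
proof -
  assume y: "y < dY" and f: "f \<in> cfun.span SB"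
  obtain u where u: "f = (\<lambda>z. \<Sum>w\<in>SB. u w * w z)"
    using f unfolding cfun_span_finite_iff[OF SB(4)] by blast
  have "lift f y = (\<lambda>a. \<Sum>w\<in>SB. u w * lift w y a)"
    unfolding u lift_def by (auto simp: fun_eq_iff)
  also have "\<dots> \<in> cfun.span Lifted"
    using y by (intro cfun_lincomb_in_span SB(4)) (auto simp: Lifted_def)
  finally show ?thesis .
qed

lemma KB_column_in_span:
  assumes b: "b \<in> KB" and i: "i < d"
  shows "(\<lambda>a. b (a,i)) \<in> cfun.span Lifted"
proof -
  obtain k where k: "k < nB" "b = kraus_vec k" using b KB(1) Kraus_def by auto
  have sl_in: "slice k y i \<in> cfun.span SB" if "y < dY" for y
  proof -
    have "slice k y i \<in> Slices" unfolding Slices_def using k(1) i that by (intro image_eqI[of _ _ "(k,y,i)"]) auto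
    then show ?thesis using SB(3) by blast
  qed
  have "(\<lambda>a. b (a,i)) = (\<lambda>a. \<Sum>y<dY. 1 * lift (slice k y i) y a)"
  proof
    fix a
    show "b (a,i) = (\<Sum>y<dY. 1 * lift (slice k y i) y a)"
    proof (cases "a < dN")
      case True
      note gi = g_inv[OF True]
      have "(\<Sum>y<dY. 1 * lift (slice k y i) y a) = (\<Sum>y<dY. if snd (g_inv a) = y then slice k y i (fst (g_inv a)) else 0)"
        using True by (intro sum.cong refl) (simp add: lift_def)
      also have "\<dots> = slice k (snd (g_inv a)) i (fst (g_inv a))" using gi by simp
      also have "\<dots> = (Bs!k) a i" using gi by (simp add: slice_def)
      finally show ?thesis using k True i by (simp add: kraus_vec_def)
    next
      case False
      then show ?thesis using k by (simp add: kraus_vec_def lift_def)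
    qed
  qed
  also have "\<dots> \<in> cfun.span (cfun.span Lifted)"
    by (intro cfun_lincomb_in_span lift_in_span sl_in) auto
  finally show ?thesis by (simp add: cfun.span_span)
qed

lemma card_KB_mult_le: "card KB * d \<le> card SB * dY"
proof -
  have "(\<lambda>(b,i). \<lambda>a. b (a,i)) ` (KB \<times> {..<d}) \<subseteq> cfun.span Lifted"
    using KB_column_in_span by auto
  then have "card ((\<lambda>(b,i). \<lambda>a. b (a,i)) ` (KB \<times> {..<d})) \<le> card Lifted"
    using cfun.independent_span_bound[OF finite_Lifted] KB_columns_independent by blast
  then show ?thesis using card_KB_columns card_Lifted by simp
qed

abbreviation KY where "KY \<equiv> {..<nB} \<times> {..<dY}"

definition Slices_at where "Slices_at i0 = (\<lambda>p. slice (fst p) (snd p) i0) ` KY"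

lemma finite_Slices_at: "finite (Slices_at i0)"
  unfolding Slices_at_def by simp

lemma slice_outside: "\<not> z < dZ \<Longrightarrow> slice k y i z = 0"
  by (simp add: slice_def)

text \<open>\<open>Zop i0\<close> is the frame operator \<open>h \<mapsto> \<Sum> \<langle>s, h\<rangle> s\<close> of the slices \<open>s\<close> in
\<open>Slices_at i0\<close> (lemma \<open>Zop_lincomb\<close>); being injective on their span, it maps the span onto
itself, so every slice is of the form \<open>Zop i0 h\<close>.\<close>

definition Zop where
  "Zop i0 h = (\<lambda>z. if z < dZ then (\<Sum>z'<dZ. Zmarg i0 i0 z z' * h z') else 0)"

lemma Zop_lincomb:
  "Zop i0 h = (\<lambda>z. \<Sum>p\<in>KY.
     (\<Sum>z'<dZ. cnj (slice (fst p) (snd p) i0 z') * h z') * slice (fst p) (snd p) i0 z)"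
proof
  fix z
  show "Zop i0 h z = (\<Sum>p\<in>KY.
     (\<Sum>z'<dZ. cnj (slice (fst p) (snd p) i0 z') * h z') * slice (fst p) (snd p) i0 z)"
  proof (cases "z < dZ")
    case True
    have "(\<Sum>p\<in>KY. (\<Sum>z'<dZ. cnj (slice (fst p) (snd p) i0 z') * h z') * slice (fst p) (snd p) i0 z)
       = (\<Sum>k<nB. \<Sum>y<dY. (\<Sum>z'<dZ. cnj (slice k y i0 z') * h z') * slice k y i0 z)"
      by (simp add: sum.cartesian_product case_prod_unfold)
    also have "\<dots> = (\<Sum>y<dY. \<Sum>k<nB. (\<Sum>z'<dZ. cnj (slice k y i0 z') * h z') * slice k y i0 z)"
      by (rule sum.swap)
    also have "\<dots> = (\<Sum>y<dY. \<Sum>k<nB. \<Sum>z'<dZ. (Bs!k) (g (z,y)) i0 * cnj ((Bs!k) (g (z',y)) i0) * h z')"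
      using True by (intro sum.cong refl) (simp add: slice_def sum_distrib_right sum_distrib_left mult_ac)
    also have "\<dots> = Zop i0 h z"
      using True by (subst sum_rotate3) (simp add: Zop_def Zmarg_def sum_distrib_right)
    finally show ?thesis by simp
  qed (simp add: Zop_def slice_outside)
qed

lemma Zop_in_span: "Zop i0 h \<in> cfun.span (Slices_at i0)"
  unfolding Zop_lincomb by (intro cfun_lincomb_in_span) (auto simp: Slices_at_def)

lemma linear_Zop: "Vector_Spaces.linear fun_scale fun_scale (Zop i0)"
  unfolding Vector_Spaces.linear_iff
proof (intro conjI allI)
  show "vector_space (fun_scale :: complex \<Rightarrow> (nat \<Rightarrow> complex) \<Rightarrow> _)"
    by (rule cfun.vector_space_axioms)
  then show "vector_space (fun_scale :: complex \<Rightarrow> (nat \<Rightarrow> complex) \<Rightarrow> _)" .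
  fix x y :: "nat \<Rightarrow> complex" and c :: complex
  show "Zop i0 (x + y) = Zop i0 x + Zop i0 y"
    by (simp add: Zop_def fun_eq_iff algebra_simps sum.distrib)
  show "Zop i0 (fun_scale c x) = fun_scale c (Zop i0 x)"
    by (simp add: Zop_def fun_eq_iff sum_distrib_left mult_ac)
qed

lemma cfun_span_orthogonal_eq_0:
  fixes N :: nat
  assumes fin: "finite G" and w: "w \<in> cfun.span G"
    and orth: "\<And>v. v \<in> G \<Longrightarrow> (\<Sum>z<N. cnj (v z) * w z) = 0"
    and outside: "\<And>v z. v \<in> G \<Longrightarrow> \<not> z < N \<Longrightarrow> v z = 0"
  shows "w = 0"
proof
  obtain u where u: "w = (\<lambda>z. \<Sum>v\<in>G. u v * v z)"
    using w unfolding cfun_span_finite_iff[OF fin] by blast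
  have "(\<Sum>z<N. w z * cnj (w z)) = (\<Sum>z<N. \<Sum>v\<in>G. cnj (u v) * (cnj (v z) * w z))"
    by (subst (2) u) (simp add: sum_distrib_left sum_distrib_right mult_ac)
  also have "\<dots> = (\<Sum>v\<in>G. cnj (u v) * (\<Sum>z<N. cnj (v z) * w z))"
    by (subst sum.swap) (simp add: sum_distrib_left)
  also have "\<dots> = 0" using orth by simp
  finally have norm0: "(\<Sum>z<N. w z * cnj (w z)) = 0" .
  fix z
  show "w z = 0 z"
  proof (cases "z < N")
    case True
    show ?thesis by (simp add: sum_mult_cnj_eq_0D[OF finite_lessThan norm0] True)
  next
    case False
    then show ?thesis using u outside by (auto intro!: sum.neutral)
  qed
qed

lemma Zop_eq_0D:
  assumes w: "w \<in> cfun.span (Slices_at i0)" and Zop_w: "Zop i0 w = 0"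
  shows "w = 0"
proof (rule cfun_span_orthogonal_eq_0[OF finite_Slices_at w])
  define c where "c p = (\<Sum>z'<dZ. cnj (slice (fst p) (snd p) i0 z') * w z')" for p
  have "0 = (\<Sum>z<dZ. cnj (w z) * Zop i0 w z)" using Zop_w by simp
  also have "\<dots> = (\<Sum>z<dZ. \<Sum>p\<in>KY. c p * (cnj (w z) * slice (fst p) (snd p) i0 z))"
    unfolding Zop_lincomb c_def by (simp add: sum_distrib_left mult_ac)
  also have "\<dots> = (\<Sum>p\<in>KY. c p * (\<Sum>z<dZ. cnj (w z) * slice (fst p) (snd p) i0 z))"
    by (subst sum.swap) (simp add: sum_distrib_left)
  also have "\<dots> = (\<Sum>p\<in>KY. c p * cnj (c p))"
    unfolding c_def by (simp add: mult.commute)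
  finally have "(\<Sum>p\<in>KY. c p * cnj (c p)) = 0" by simp
  then have "c p = 0" if "p \<in> KY" for p
    using sum_mult_cnj_eq_0D[of KY c p] that by simp
  then show "(\<Sum>z<dZ. cnj (v z) * w z) = 0" if "v \<in> Slices_at i0" for v
    using that unfolding Slices_at_def c_def by auto
  show "v z = 0" if "v \<in> Slices_at i0" "\<not> z < dZ" for v z
    using that by (auto simp: Slices_at_def slice_outside)
qed

lemma SB_in_range_Zop:
  assumes f: "f \<in> SB"
  obtains i0 h where "i0 < d" "f = Zop i0 h"
proof -
  obtain k y i0 where kyi: "k < nB" "y < dY" "i0 < d" "f = slice k y i0"
    using f SB(1) unfolding Slices_def by auto
  have "f \<in> Slices_at i0"
    unfolding Slices_at_def using kyi by (intro image_eqI[of _ _ "(k,y)"]) auto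
  then have "f \<in> Zop i0 ` cfun.span (Slices_at i0)"
    using cfun_linear_inj_on_span_onto[OF finite_Slices_at linear_Zop]
      Zop_in_span Zop_eq_0D cfun.span_base by blast
  then show ?thesis using kyi(3) that by blast
qed

lemma Zmarg_Zop:
  assumes "i0 < d" "i < d" "j < d" "z < dZ"
  shows "(\<Sum>z'<dZ. Zmarg i j z z' * h z') = (if i = j then Zop i0 h z else 0)"
proof -
  have "(\<Sum>z'<dZ. Zmarg i j z z' * h z') = (\<Sum>z'<dZ. (if i = j then Zmarg i0 i0 z z' else 0) * h z')"
    using assms Zmarg_delta[of i j z] Zmarg_diag[of i0 z] by (intro sum.cong refl) auto
  then show ?thesis using assms by (simp add: Zop_def)
qed

definition Z_part :: "nat \<Rightarrow> (nat \<times> nat \<Rightarrow> complex) \<Rightarrow> nat \<times> nat \<Rightarrow> complex" where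
  "Z_part y X = (\<lambda>(z,i). if z < dZ \<and> i < d then X (g (z,y), i) else 0)"

definition Kraus_Z where "Kraus_Z = (\<lambda>p. Z_part (snd p) (kraus_vec (fst p))) ` KY"

definition KB_Z where "KB_Z = (\<lambda>(b,y). Z_part y b) ` (KB \<times> {..<dY})"

lemma finite_KB_Z: "finite KB_Z"
  unfolding KB_Z_def using KB(4) by simp

lemma card_KB_Z: "card KB_Z \<le> card KB * dY"
  unfolding KB_Z_def using card_image_le[of "KB \<times> {..<dY}" "\<lambda>(b,y). Z_part y b"] KB(4)
  by (simp add: card_cartesian_product)

lemma Kraus_Z_in_span: "Kraus_Z \<subseteq> cfun.span KB_Z"
proof
  fix v assume "v \<in> Kraus_Z"
  then obtain k y where ky: "k < nB" "y < dY" "v = Z_part y (kraus_vec k)"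
    unfolding Kraus_Z_def by auto
  have "kraus_vec k \<in> cfun.span KB" using KB(3) ky(1) Kraus_def by auto
  then obtain u where u: "kraus_vec k = (\<lambda>x. \<Sum>b\<in>KB. u b * b x)"
    unfolding cfun_span_finite_iff[OF KB(4)] by blast
  have "v = (\<lambda>x. \<Sum>b\<in>KB. u b * Z_part y b x)"
    unfolding ky(3) u by (auto simp: Z_part_def fun_eq_iff)
  also have "\<dots> \<in> cfun.span KB_Z"
    using ky(2) by (intro cfun_lincomb_in_span KB(4)) (auto simp: KB_Z_def)
  finally show "v \<in> cfun.span KB_Z" .
qed

lemma Zmarg_lincomb:
  "(\<Sum>p\<in>KY. (\<Sum>z'<dZ. h z' * cnj ((Bs!(fst p)) (g (z', snd p)) j)) * (Bs!(fst p)) (g (z, snd p)) i)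
    = (\<Sum>z'<dZ. Zmarg i j z z' * h z')"
proof -
  have "(\<Sum>p\<in>KY. (\<Sum>z'<dZ. h z' * cnj ((Bs!(fst p)) (g (z', snd p)) j)) * (Bs!(fst p)) (g (z, snd p)) i)
     = (\<Sum>k<nB. \<Sum>y<dY. (\<Sum>z'<dZ. h z' * cnj ((Bs!k) (g (z', y)) j)) * (Bs!k) (g (z, y)) i)"
    by (simp add: sum.cartesian_product case_prod_unfold)
  also have "\<dots> = (\<Sum>y<dY. \<Sum>k<nB. (\<Sum>z'<dZ. h z' * cnj ((Bs!k) (g (z', y)) j)) * (Bs!k) (g (z, y)) i)"
    by (rule sum.swap)
  also have "\<dots> = (\<Sum>y<dY. \<Sum>k<nB. \<Sum>z'<dZ. (Bs!k) (g (z,y)) i * cnj ((Bs!k) (g (z',y)) j) * h z')"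
    by (intro sum.cong refl) (simp add: sum_distrib_right sum_distrib_left mult_ac)
  also have "\<dots> = (\<Sum>z'<dZ. Zmarg i j z z' * h z')"
    by (subst sum_rotate3) (simp add: Zmarg_def sum_distrib_right)
  finally show ?thesis .
qed

definition diag_embed where
  "diag_embed = (\<lambda>(f,j). (\<lambda>(z,i). if i = j then f z else (0::complex)))"

lemma SB_outside: "f \<in> SB \<Longrightarrow> \<not> z < dZ \<Longrightarrow> f z = 0"
  using SB(1) unfolding Slices_def by (auto simp: slice_outside)

lemma diag_embed_in_span:
  assumes f: "f \<in> SB" and j: "j < d"
  shows "diag_embed (f,j) \<in> cfun.span Kraus_Z"
proof -
  obtain i0 h where i0: "i0 < d" and f_eq: "f = Zop i0 h"
    using SB_in_range_Zop[OF f] by blast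
  define coef where "coef p = (\<Sum>z'<dZ. h z' * cnj ((Bs!(fst p)) (g (z', snd p)) j))" for p
  have "diag_embed (f,j) = (\<lambda>x. \<Sum>p\<in>KY. coef p * Z_part (snd p) (kraus_vec (fst p)) x)"
  proof
    fix x :: "nat \<times> nat"
    obtain z i where x: "x = (z,i)" by fastforce
    show "diag_embed (f,j) x = (\<Sum>p\<in>KY. coef p * Z_part (snd p) (kraus_vec (fst p)) x)"
    proof (cases "z < dZ \<and> i < d")
      case True
      have "(\<Sum>p\<in>KY. coef p * Z_part (snd p) (kraus_vec (fst p)) x)
          = (\<Sum>p\<in>KY. coef p * (Bs!(fst p)) (g (z, snd p)) i)"
        using True x g_less by (intro sum.cong refl) (auto simp: Z_part_def kraus_vec_def)
      also have "\<dots> = (\<Sum>z'<dZ. Zmarg i j z z' * h z')"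
        unfolding coef_def by (rule Zmarg_lincomb)
      also have "\<dots> = diag_embed (f,j) x"
        using Zmarg_Zop[OF i0 _ j] True x f_eq by (simp add: diag_embed_def)
      finally show ?thesis by simp
    next
      case False
      then have "diag_embed (f,j) x = 0" and "Z_part y (kraus_vec k) x = 0" for k y
        using x j SB_outside[OF f] by (auto simp: diag_embed_def Z_part_def)
      then show ?thesis by simp
    qed
  qed
  also have "\<dots> \<in> cfun.span Kraus_Z"
    by (intro cfun_lincomb_in_span) (auto simp: Kraus_Z_def)
  finally show ?thesis .
qed

lemma diag_embed_independent:
  "inj_on diag_embed (SB \<times> {..<d}) \<and> cfun.independent (diag_embed ` (SB \<times> {..<d}))"
proof (rule cfun_inj_independent_if_no_relation)
  show "finite (SB \<times> {..<d})" using SB(4) by simp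
  fix c :: "(nat \<Rightarrow> complex) \<times> nat \<Rightarrow> complex"
  assume rel: "\<And>x. (\<Sum>p\<in>SB \<times> {..<d}. c p * diag_embed p x) = 0"
  show "\<forall>p\<in>SB \<times> {..<d}. c p = 0"
  proof
    fix p assume "p \<in> SB \<times> {..<d}"
    then obtain f j where fj: "p = (f,j)" "f \<in> SB" "j < d" by auto
    have "(\<Sum>f\<in>SB. c (f,j) * f z) = 0" for z
    proof -
      have "(\<Sum>p\<in>SB \<times> {..<d}. c p * diag_embed p (z,j)) =
          (\<Sum>f\<in>SB. \<Sum>j'<d. c (f,j') * (if j = j' then f z else 0))"
        unfolding sum.cartesian_product by (intro sum.cong refl) (auto simp: diag_embed_def)
      also have "\<dots> = (\<Sum>f\<in>SB. c (f,j) * f z)"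
        using fj(3) by (simp add: if_distrib cong: if_cong)
      finally show ?thesis using rel[of "(z,j)"] by simp
    qed
    then show "c p = 0"
      using cfun_independent_coeff_eq_0[OF SB(4,2), of "\<lambda>f. c (f,j)"] fj by blast
  qed
qed

lemma card_SB_mult_le: "card SB * d \<le> card KB * dY"
proof -
  have "cfun.span Kraus_Z \<subseteq> cfun.span KB_Z"
    using Kraus_Z_in_span cfun.span_mono cfun.span_span by blast
  then have "diag_embed ` (SB \<times> {..<d}) \<subseteq> cfun.span KB_Z"
    using diag_embed_in_span by blast
  then have "card (diag_embed ` (SB \<times> {..<d})) \<le> card KB_Z"
    using cfun.independent_span_bound[OF finite_KB_Z] diag_embed_independent by blast
  moreover have "card (diag_embed ` (SB \<times> {..<d})) = card SB * d"
    using diag_embed_independent by (simp add: card_image card_cartesian_product)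
  ultimately show ?thesis using card_KB_Z by simp
qed

lemma KB_nonempty: "KB \<noteq> {}"
proof
  assume KB_empty: "KB = {}"
  have Bs_0: "(Bs!k) a i = 0" if "k < nB" "a < dN" "i < d" for k a i
  proof -
    have "kraus_vec k \<in> cfun.span KB" using KB(3) that(1) Kraus_def by auto
    then have "kraus_vec k (a,i) = 0" using KB_empty by simp
    then show ?thesis using that by (simp add: kraus_vec_def)
  qed
  have "apply_channel d dN Bs (ket_state 0) = (\<lambda>a b. 0)"
    by (auto simp: fun_eq_iff apply_channel_nth Bs_0 intro!: sum.neutral)
  then have "apply_channel dN d Rs (\<lambda>a b. 0) 0 0 = ket_state 0 0 0"
    using recovers[OF density_ket_state[OF d_pos]] by simp
  then show False using d_pos by (simp add: apply_channel_def pure_state_def ket_def)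
qed

lemma d_le_dY: "d \<le> dY"
proof -
  have KB_pos: "0 < card KB" using KB_nonempty KB(4) by (simp add: card_gt_0_iff)
  then have SB_pos: "0 < card SB" using card_KB_mult_le d_pos by (cases "card SB") auto
  have "(card KB * card SB) * (d * d) \<le> (card KB * card SB) * (dY * dY)"
    using mult_le_mono[OF card_KB_mult_le card_SB_mult_le] by (simp add: mult_ac)
  then have "d * d \<le> dY * dY" using KB_pos SB_pos by simp
  then show ?thesis by (meson mult_strict_mono' not_le zero_le)
qed

end

section \<open>Positional encoding of qudit indices\<close>

definition from_digits :: "nat \<Rightarrow> nat \<Rightarrow> (nat \<Rightarrow> nat) \<Rightarrow> nat" where
  "from_digits q W \<delta> = (\<Sum>k<W. q ^ k * \<delta> k)"

lemma from_digits_Suc: "from_digits q (Suc W) \<delta> = from_digits q W \<delta> + q ^ W * \<delta> W"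
  by (simp add: from_digits_def)

lemma from_digits_less:
  assumes "\<And>k. k < W \<Longrightarrow> \<delta> k < q"
  shows "from_digits q W \<delta> < q ^ W"
  using assms
proof (induction W)
  case 0 then show ?case by (simp add: from_digits_def)
next
  case (Suc W)
  have ih: "from_digits q W \<delta> < q ^ W" using Suc by simp
  have dW: "\<delta> W + 1 \<le> q" using Suc.prems[of W] by simp
  have "from_digits q (Suc W) \<delta> = from_digits q W \<delta> + q ^ W * \<delta> W" by (rule from_digits_Suc)
  also have "\<dots> < q ^ W + q ^ W * \<delta> W" using ih by simp
  also have "\<dots> = q ^ W * (\<delta> W + 1)" by (simp add: algebra_simps)
  also have "\<dots> \<le> q ^ W * q" using dW by (intro mult_le_mono2) simp
  finally show ?case by (simp add: mult.commute)
qed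

lemma digit_add_high:
  assumes q: "q > 0" and A: "A < q ^ W" and k: "k < W"
  shows "digit q (A + q ^ W * t) k = digit q A k"
proof -
  have "q ^ W = q ^ k * q ^ (W - k)" using k by (simp add: power_add[symmetric])
  then have "(A + q ^ W * t) div q ^ k = A div q ^ k + q ^ (W - k) * t"
    using q by (simp add: mult.assoc)
  moreover have "q dvd q ^ (W - k) * t" using k by simp
  ultimately show ?thesis unfolding digit_def by (simp add: mod_add_right_eq[symmetric])
qed

lemma digit_add_top:
  assumes q: "q > 0" and A: "A < q ^ W" and t: "t < q"
  shows "digit q (A + q ^ W * t) W = t"
proof -
  have "(A + q ^ W * t) div q ^ W = t" using A q by simp
  then show ?thesis using t unfolding digit_def by simp
qed

lemma digit_from_digits:
  assumes q: "q > 0" and "\<And>k. k < W \<Longrightarrow> \<delta> k < q" and "k < W"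
  shows "digit q (from_digits q W \<delta>) k = \<delta> k"
  using assms(2,3)
proof (induction W)
  case 0 then show ?case by simp
next
  case (Suc W)
  have lt: "from_digits q W \<delta> < q ^ W" using from_digits_less Suc.prems by simp
  show ?case
  proof (cases "k < W")
    case True
    then show ?thesis unfolding from_digits_Suc using digit_add_high[OF q lt True] Suc by simp
  next
    case False
    then have "k = W" using Suc.prems by simp
    then show ?thesis unfolding from_digits_Suc using digit_add_top[OF q lt] Suc.prems by simp
  qed
qed

lemma digit_less: "q > 0 \<Longrightarrow> digit q x k < q"
  by (simp add: digit_def)

lemma from_digits_digit:
  assumes q: "q > 0"
  shows "x < q ^ W \<Longrightarrow> from_digits q W (digit q x) = x"
proof (induction W arbitrary: x)
  case 0 then show ?case by (simp add: from_digits_def)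
next
  case (Suc W)
  have "digit q x k = digit q (x mod q ^ W) k" if "k < W" for k
  proof -
    have "x mod q ^ W < q ^ W" using q by simp
    then have "digit q (x mod q ^ W + q ^ W * (x div q ^ W)) k = digit q (x mod q ^ W) k"
      using digit_add_high[OF q _ that] by blast
    then show ?thesis by simp
  qed
  then have "from_digits q W (digit q x) = from_digits q W (digit q (x mod q ^ W))"
    by (simp add: from_digits_def)
  also have "\<dots> = x mod q ^ W" using Suc.IH q by simp
  finally have a: "from_digits q W (digit q x) = x mod q ^ W" .
  have "x div q ^ W < q" using Suc.prems q by (simp add: div_less_iff_less_mult mult.commute)
  then have b: "digit q x W = x div q ^ W" by (simp add: digit_def)
  show ?case unfolding from_digits_Suc a b by simp
qed

lemma eq_if_digits_eq:
  assumes "q > 0" "x < q ^ W" "y < q ^ W" "\<And>k. k < W \<Longrightarrow> digit q x k = digit q y k"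
  shows "x = y"
proof -
  have "from_digits q W (digit q x) = from_digits q W (digit q y)"
    using assms(4) by (simp add: from_digits_def)
  then show ?thesis using from_digits_digit[OF assms(1)] assms(2,3) by simp
qed

lemma rank_in_strict_mono:
  assumes "finite S" "k1 \<in> S" "k1 < k2"
  shows "rank_in S k1 < rank_in S k2"
proof -
  have "{x \<in> S. x < k1} \<subset> {x \<in> S. x < k2}" using assms by auto
  then show ?thesis unfolding rank_in_def using assms(1) by (intro psubset_card_mono) auto
qed

lemma strict_mono_on_rank_in: "finite S \<Longrightarrow> strict_mono_on S (rank_in S)"
  by (intro strict_mono_onI rank_in_strict_mono)

lemma inj_on_rank_in: "finite S \<Longrightarrow> inj_on (rank_in S) S"
  by (rule strict_mono_on_imp_inj_on[OF strict_mono_on_rank_in])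

lemma rank_in_less_card: "finite S \<Longrightarrow> k \<in> S \<Longrightarrow> rank_in S k < card S"
  unfolding rank_in_def by (intro psubset_card_mono) auto

lemma bij_betw_rank_in:
  assumes "finite S"
  shows "bij_betw (rank_in S) S {..<card S}"
proof -
  have "rank_in S ` S \<subseteq> {..<card S}" using rank_in_less_card[OF assms] by auto
  moreover have "card (rank_in S ` S) = card S" using card_image[OF inj_on_rank_in[OF assms]] .
  ultimately have "rank_in S ` S = {..<card S}" by (intro card_subset_eq) auto
  then show ?thesis using inj_on_rank_in[OF assms] by (simp add: bij_betw_def)
qed

lemma card_rank_in_image: "finite B \<Longrightarrow> A \<subseteq> B \<Longrightarrow> card (rank_in B ` A) = card A"
  using card_image inj_on_subset inj_on_rank_in by metis

lemma rank_in_image_rank_in: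
  assumes "finite B" "A \<subseteq> B" "k \<in> B"
  shows "rank_in (rank_in B ` A) (rank_in B k) = rank_in A k"
proof -
  have "{x \<in> rank_in B ` A. x < rank_in B k} = rank_in B ` {y \<in> A. y < k}"
    using strict_mono_on_less[OF strict_mono_on_rank_in[OF assms(1)] _ assms(3)] assms(2) by blast
  moreover have "inj_on (rank_in B) {y \<in> A. y < k}"
    using inj_on_rank_in[OF assms(1)] assms(2) by (auto intro: inj_on_subset)
  ultimately show ?thesis
    unfolding rank_in_def[of "rank_in B ` A"] rank_in_def[of A] by (simp add: card_image)
qed

lemma rank_in_image_Diff:
  assumes "finite B" "A \<subseteq> B"
  shows "{..<card B} - rank_in B ` A = rank_in B ` (B - A)"
proof -
  have "rank_in B ` (B - A) = rank_in B ` B - rank_in B ` A"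
    using inj_on_rank_in[OF assms(1)] assms(2) by (intro inj_on_image_set_diff) auto
  then show ?thesis using bij_betw_rank_in[OF assms(1)] unfolding bij_betw_def by simp
qed

lemma merge_idx_eq_from_digits:
  "merge_idx q W S a c = from_digits q W
     (\<lambda>k. if k \<in> S then digit q a (rank_in S k) else digit q c (rank_in ({..<W} - S) k))"
  unfolding merge_idx_def from_digits_def ..

lemma merge_idx_less: "q > 0 \<Longrightarrow> merge_idx q W S a c < q ^ W"
  unfolding merge_idx_eq_from_digits by (rule from_digits_less) (auto simp: digit_less)

lemma digit_merge_idx:
  "q > 0 \<Longrightarrow> k < W \<Longrightarrow> digit q (merge_idx q W S a c) k =
    (if k \<in> S then digit q a (rank_in S k) else digit q c (rank_in ({..<W} - S) k))"
  unfolding merge_idx_eq_from_digits by (rule digit_from_digits) (auto simp: digit_less)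

lemma inj_on_merge_idx:
  assumes q: "q > 0" and S: "S \<subseteq> {..<W}"
  shows "inj_on (\<lambda>(a,c). merge_idx q W S a c) ({..<q ^ card S} \<times> {..<q ^ (W - card S)})"
proof (rule inj_onI, clarsimp)
  fix a c a' c'
  assume a: "a < q ^ card S" "a' < q ^ card S" and c: "c < q ^ (W - card S)" "c' < q ^ (W - card S)"
    and eq: "merge_idx q W S a c = merge_idx q W S a' c'"
  have fS: "finite S" using S finite_subset by blast
  define C where "C = {..<W} - S"
  have fC: "finite C" and cC: "card C = W - card S"
    unfolding C_def using S fS by (simp_all add: card_Diff_subset)
  have "digit q a r = digit q a' r" if "r < card S" for r
  proof -
    have "r \<in> rank_in S ` S" using bij_betw_rank_in[OF fS] that unfolding bij_betw_def by simp
    then obtain k where k: "k \<in> S" "rank_in S k = r" by blast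
    then show ?thesis
      using arg_cong[OF eq, of "\<lambda>x. digit q x k"] S by (auto simp: digit_merge_idx[OF q])
  qed
  moreover have "digit q c r = digit q c' r" if "r < W - card S" for r
  proof -
    have "r \<in> rank_in C ` C" using bij_betw_rank_in[OF fC] that cC unfolding bij_betw_def by simp
    then obtain k where k: "k \<in> C" "rank_in C k = r" by blast
    then show ?thesis
      using arg_cong[OF eq, of "\<lambda>x. digit q x k"] by (auto simp: digit_merge_idx[OF q] C_def)
  qed
  ultimately show "a = a' \<and> c = c'"
    using eq_if_digits_eq[OF q a] eq_if_digits_eq[OF q c] by blast
qed

lemma bij_betw_merge_idx:
  assumes q: "q > 0" and S: "S \<subseteq> {..<W}"
  shows "bij_betw (\<lambda>(a,c). merge_idx q W S a c) ({..<q ^ card S} \<times> {..<q ^ (W - card S)}) {..<q ^ W}"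
proof -
  let ?f = "\<lambda>(a,c). merge_idx q W S a c" and ?D = "{..<q ^ card S} \<times> {..<q ^ (W - card S)}"
  have "card (?f ` ?D) = q ^ card S * q ^ (W - card S)"
    using card_image[OF inj_on_merge_idx[OF assms]] by (simp add: card_cartesian_product)
  also have "\<dots> = q ^ W"
    using S card_mono[of "{..<W}" S] by (simp add: power_add[symmetric])
  finally have "?f ` ?D = {..<q ^ W}"
    using merge_idx_less[OF q] by (intro card_subset_eq) auto
  then show ?thesis using inj_on_merge_idx[OF assms] by (simp add: bij_betw_def)
qed

lemma rank_in_nested_inside:
  assumes S12: "S1 \<subseteq> S2" and S2: "S2 \<subseteq> {..<W}" and k: "k \<in> S2" "k \<notin> S1"
  shows "rank_in S2 k \<notin> rank_in S2 ` S1"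
    and "rank_in ({..<card S2} - rank_in S2 ` S1) (rank_in S2 k) = rank_in (S2 - S1) k"
    and "rank_in (rank_in ({..<W} - S1) ` (S2 - S1)) (rank_in ({..<W} - S1) k) = rank_in (S2 - S1) k"
proof -
  have fS2: "finite S2" using S2 finite_subset by blast
  show "rank_in S2 k \<notin> rank_in S2 ` S1"
    using inj_on_rank_in[OF fS2] S12 k by (auto dest: inj_onD)
  show "rank_in ({..<card S2} - rank_in S2 ` S1) (rank_in S2 k) = rank_in (S2 - S1) k"
    unfolding rank_in_image_Diff[OF fS2 S12] by (rule rank_in_image_rank_in[OF fS2 _ k(1)]) auto
  show "rank_in (rank_in ({..<W} - S1) ` (S2 - S1)) (rank_in ({..<W} - S1) k) = rank_in (S2 - S1) k"
    using S2 k by (intro rank_in_image_rank_in) auto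
qed

lemma rank_in_nested_outside:
  assumes S12: "S1 \<subseteq> S2" and S2: "S2 \<subseteq> {..<W}" and k: "k < W" "k \<notin> S2"
  defines "C1 \<equiv> {..<W} - S1"
  shows "rank_in C1 k \<notin> rank_in C1 ` (S2 - S1)"
    and "rank_in ({..<W - card S1} - rank_in C1 ` (S2 - S1)) (rank_in C1 k) = rank_in ({..<W} - S2) k"
proof -
  have fC1: "finite C1" and kC1: "k \<in> C1" and sub: "S2 - S1 \<subseteq> C1"
    using k S12 S2 by (auto simp: C1_def)
  have "card C1 = W - card S1"
    unfolding C1_def using S12 S2 finite_subset[of S1 "{..<W}"] by (subst card_Diff_subset) auto
  moreover have "C1 - (S2 - S1) = {..<W} - S2" unfolding C1_def using S12 by auto
  ultimately have compl: "{..<W - card S1} - rank_in C1 ` (S2 - S1) = rank_in C1 ` ({..<W} - S2)"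
    using rank_in_image_Diff[OF fC1 sub] by simp
  show "rank_in C1 k \<notin> rank_in C1 ` (S2 - S1)"
    using inj_on_rank_in[OF fC1] kC1 k S12 S2 by (auto simp: C1_def dest: inj_onD)
  show "rank_in ({..<W - card S1} - rank_in C1 ` (S2 - S1)) (rank_in C1 k) = rank_in ({..<W} - S2) k"
    unfolding compl using k kC1 S12 by (intro rank_in_image_rank_in[OF fC1]) (auto simp: C1_def)
qed

text \<open>Tracing out the complement of \<open>S1\<close> in one step, or first the complement of
\<open>S2 \<supseteq> S1\<close> and then the rest, enumerates the same indices.\<close>

lemma merge_idx_nested:
  assumes q: "q > 0" and S12: "S1 \<subseteq> S2" and S2: "S2 \<subseteq> {..<W}"
  shows "merge_idx q W S1 a (merge_idx q (W - card S1) (rank_in ({..<W} - S1) ` (S2 - S1)) c2 c1)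
    = merge_idx q W S2 (merge_idx q (card S2) (rank_in S2 ` S1) a c2) c1"
proof (rule eq_if_digits_eq[OF q merge_idx_less[OF q] merge_idx_less[OF q]])
  have fS2: "finite S2" using S2 finite_subset by blast
  fix k assume k: "k < W"
  have rank_C1: "rank_in ({..<W} - S1) k < W - card S1" if "k \<notin> S1"
    using rank_in_less_card[of "{..<W} - S1" k] that k S12 S2 finite_subset[of S1 "{..<W}"]
    by (simp add: card_Diff_subset)
  consider "k \<in> S1" | "k \<in> S2 - S1" | "k \<notin> S2" by blast
  then show "digit q (merge_idx q W S1 a (merge_idx q (W - card S1)
      (rank_in ({..<W} - S1) ` (S2 - S1)) c2 c1)) k =
    digit q (merge_idx q W S2 (merge_idx q (card S2) (rank_in S2 ` S1) a c2) c1) k"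
  proof cases
    case 1
    then have "k \<in> S2" using S12 by auto
    then show ?thesis
      using 1 k rank_in_less_card[OF fS2] rank_in_image_rank_in[OF fS2 S12]
      by (simp add: digit_merge_idx[OF q])
  next
    case 2
    then show ?thesis
      using k rank_C1 rank_in_less_card[OF fS2] rank_in_nested_inside[OF S12 S2, of k]
      by (simp add: digit_merge_idx[OF q])
  next
    case 3
    then have "k \<notin> S1" using S12 by auto
    with 3 show ?thesis
      using k rank_C1 S12 rank_in_nested_outside[OF S12 S2 k]
      by (simp add: digit_merge_idx[OF q])
  qed
qed

lemma ptrace_ptrace:
  assumes q: "q > 0" and S12: "S1 \<subseteq> S2" and S2: "S2 \<subseteq> {..<W}"
  shows "ptrace q W S1 \<rho> = ptrace q (card S2) (rank_in S2 ` S1) (ptrace q W S2 \<rho>)"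
proof (intro ext)
  fix a b
  have fS2: "finite S2" using S2 finite_subset by blast
  have s12: "card S1 \<le> card S2" and s2W: "card S2 \<le> W"
    using card_mono[OF fS2 S12] card_mono[of "{..<W}" S2] S2 by auto
  have cS1': "card (rank_in S2 ` S1) = card S1" by (rule card_rank_in_image[OF fS2 S12])
  define T where "T = rank_in ({..<W} - S1) ` (S2 - S1)"
  define \<phi> where "\<phi> = (\<lambda>(c2,c1). merge_idx q (W - card S1) T c2 c1)"
  have fC1: "finite ({..<W} - S1)" and sub: "S2 - S1 \<subseteq> {..<W} - S1" using S2 by auto
  have "T \<subseteq> {..<W - card S1}"
    unfolding T_def using rank_in_less_card[OF fC1] sub S12 S2 finite_subset[of S1 "{..<W}"]
    by (force simp: card_Diff_subset)
  moreover have "card T = card S2 - card S1"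
    unfolding T_def card_rank_in_image[OF fC1 sub] using S12 finite_subset[OF S12 fS2]
    by (simp add: card_Diff_subset)
  ultimately have bij: "bij_betw \<phi> ({..<q ^ (card S2 - card S1)} \<times> {..<q ^ (W - card S2)}) {..<q ^ (W - card S1)}"
    using bij_betw_merge_idx[OF q, of T "W - card S1"] s12 s2W unfolding \<phi>_def by simp
  show "ptrace q W S1 \<rho> a b = ptrace q (card S2) (rank_in S2 ` S1) (ptrace q W S2 \<rho>) a b"
  proof (cases "a < q ^ card S1 \<and> b < q ^ card S1")
    case True
    have "ptrace q W S1 \<rho> a b = (\<Sum>c<q ^ (W - card S1). \<rho> (merge_idx q W S1 a c) (merge_idx q W S1 b c))"
      using True unfolding ptrace_def by simp
    also have "\<dots> = (\<Sum>p\<in>{..<q ^ (card S2 - card S1)} \<times> {..<q ^ (W - card S2)}.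
          \<rho> (merge_idx q W S1 a (\<phi> p)) (merge_idx q W S1 b (\<phi> p)))"
      by (rule sum.reindex_bij_betw[OF bij, symmetric])
    also have "\<dots> = (\<Sum>c2<q ^ (card S2 - card S1). \<Sum>c1<q ^ (W - card S2).
        \<rho> (merge_idx q W S2 (merge_idx q (card S2) (rank_in S2 ` S1) a c2) c1)
          (merge_idx q W S2 (merge_idx q (card S2) (rank_in S2 ` S1) b c2) c1))"
      unfolding sum.cartesian_product \<phi>_def T_def
      by (simp add: case_prod_unfold merge_idx_nested[OF q S12 S2])
    also have "\<dots> = (\<Sum>c2<q ^ (card S2 - card S1). ptrace q W S2 \<rho>
        (merge_idx q (card S2) (rank_in S2 ` S1) a c2) (merge_idx q (card S2) (rank_in S2 ` S1) b c2))"
      using merge_idx_less[OF q] unfolding ptrace_def by simp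
    also have "\<dots> = ptrace q (card S2) (rank_in S2 ` S1) (ptrace q W S2 \<rho>) a b"
      using True cS1' unfolding ptrace_def[of q "card S2"] by simp
    finally show ?thesis .
  qed (use cS1' in \<open>auto simp: ptrace_def\<close>)
qed

definition ptrace_kraus :: "nat \<Rightarrow> nat \<Rightarrow> nat set \<Rightarrow> cmat list \<Rightarrow> cmat list" where
  "ptrace_kraus q W S Ks =
     concat (map (\<lambda>K. map (\<lambda>c a i. K (merge_idx q W S a c) i) [0..<q ^ (W - card S)]) Ks)"

lemma sum_list_concat_map: "(\<Sum>x\<leftarrow>concat (map g xs). f x) = (\<Sum>y\<leftarrow>xs. \<Sum>x\<leftarrow>g y. f x)"
  by (induction xs) auto

lemma ptrace_apply_channel:
  assumes q: "q > 0"
  shows "ptrace q W S (apply_channel d (q ^ W) Ks \<rho>) = apply_channel d (q ^ card S) (ptrace_kraus q W S Ks) \<rho>"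
proof (intro ext)
  fix a b
  show "ptrace q W S (apply_channel d (q ^ W) Ks \<rho>) a b = apply_channel d (q ^ card S) (ptrace_kraus q W S Ks) \<rho> a b"
  proof (cases "a < q ^ card S \<and> b < q ^ card S")
    case True
    have "ptrace q W S (apply_channel d (q ^ W) Ks \<rho>) a b =
      (\<Sum>c<q ^ (W - card S). \<Sum>K\<leftarrow>Ks. \<Sum>i<d. \<Sum>j<d.
        K (merge_idx q W S a c) i * \<rho> i j * cnj (K (merge_idx q W S b c) j))"
      using True merge_idx_less[OF q] unfolding ptrace_def apply_channel_def by simp
    also have "\<dots> = (\<Sum>K\<leftarrow>Ks. \<Sum>c<q ^ (W - card S). \<Sum>i<d. \<Sum>j<d.
        K (merge_idx q W S a c) i * \<rho> i j * cnj (K (merge_idx q W S b c) j))"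
      unfolding sum_list_nth by (rule sum.swap)
    also have "\<dots> = apply_channel d (q ^ card S) (ptrace_kraus q W S Ks) \<rho> a b"
      using True unfolding apply_channel_def ptrace_kraus_def sum_list_concat_map
      by (simp add: interv_sum_list_conv_sum_set_nat atLeast0LessThan)
    finally show ?thesis .
  qed (auto simp: ptrace_def apply_channel_def)
qed

section \<open>Secret sharing\<close>

lemma share_block_subset:
  assumes "j \<in> {1..n}"
  shows "share_block w j \<subseteq> {..<total_qudits n w}"
proof -
  have "(\<Sum>i\<in>{1..<j}. w i) + w j = (\<Sum>i\<in>{1..<Suc j}. w i)" using assms by simp
  also have "\<dots> \<le> (\<Sum>i\<in>{1..n}. w i)" using assms by (intro sum_mono2) auto
  finally show ?thesis unfolding share_block_def total_qudits_def by auto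
qed

lemma qudits_of_subset: "P \<subseteq> {1..n} \<Longrightarrow> qudits_of w P \<subseteq> {..<total_qudits n w}"
  unfolding qudits_of_def using share_block_subset by blast

lemma ptrace_Int_marginal:
  assumes q: "q > 0" and S: "S \<subseteq> {..<W}" and Zq: "Zq \<subseteq> {..<W}"
  defines "S' \<equiv> rank_in S ` (S \<inter> Zq)"
  assumes "a < q ^ card S'" "b < q ^ card S'"
  shows "(\<Sum>y<q ^ (card S - card S').
      ptrace q W S \<sigma> (merge_idx q (card S) S' a y) (merge_idx q (card S) S' b y))
    = ptrace q (card Zq) (rank_in Zq ` (S \<inter> Zq)) (ptrace q W Zq \<sigma>) a b"
proof -
  have "(\<Sum>y<q ^ (card S - card S').
      ptrace q W S \<sigma> (merge_idx q (card S) S' a y) (merge_idx q (card S) S' b y))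
      = ptrace q (card S) S' (ptrace q W S \<sigma>) a b"
    using assms(5,6) by (simp add: ptrace_def[of q "card S" S'])
  also have "\<dots> = ptrace q W (S \<inter> Zq) \<sigma> a b"
    unfolding S'_def using ptrace_ptrace[OF q Int_lower1 S] by simp
  also have "\<dots> = ptrace q (card Zq) (rank_in Zq ` (S \<inter> Zq)) (ptrace q W Zq \<sigma>) a b"
    using ptrace_ptrace[OF q Int_lower2 Zq] by simp
  finally show ?thesis .
qed

text \<open>The qudits of \<open>S\<close> that lie in the blind set \<open>Zq\<close> play the part of \<open>Z\<close> in
\<open>blind_part_recovery\<close>, the others that of \<open>Y\<close>.\<close>

lemma recovery_dim_le_card_Diff:
  assumes q: "q > 0" and d: "0 < d" and S: "S \<subseteq> {..<W}" and Zq: "Zq \<subseteq> {..<W}"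
    and Rs: "is_channel (q ^ card S) d Rs"
    and recovers: "\<And>\<rho>. density d \<rho> \<Longrightarrow>
      apply_channel (q ^ card S) d Rs (ptrace q W S (apply_channel d (q ^ W) Ks \<rho>)) = \<rho>"
    and blind: "\<And>\<rho> \<rho>'. density d \<rho> \<Longrightarrow> density d \<rho>' \<Longrightarrow>
      ptrace q W Zq (apply_channel d (q ^ W) Ks \<rho>) = ptrace q W Zq (apply_channel d (q ^ W) Ks \<rho>')"
  shows "d \<le> q ^ card (S - Zq)"
proof -
  define S' where "S' = rank_in S ` (S \<inter> Zq)"
  define Bs where "Bs = ptrace_kraus q W S Ks"
  have fS: "finite S" using S finite_subset by blast
  have S'_sub: "S' \<subseteq> {..<card S}" unfolding S'_def using rank_in_less_card[OF fS] by auto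
  have Bs_eq: "ptrace q W S (apply_channel d (q ^ W) Ks \<rho>) = apply_channel d (q ^ card S) Bs \<rho>" for \<rho>
    unfolding Bs_def by (rule ptrace_apply_channel[OF q])
  have "blind_part_recovery d (q ^ card S) (q ^ card S') (q ^ (card S - card S'))
      (\<lambda>(a,y). merge_idx q (card S) S' a y) Bs Rs"
  proof
    show "bij_betw (\<lambda>(a,y). merge_idx q (card S) S' a y)
        ({..<q ^ card S'} \<times> {..<q ^ (card S - card S')}) {..<q ^ card S}"
      by (rule bij_betw_merge_idx[OF q S'_sub])
    show "apply_channel (q ^ card S) d Rs (apply_channel d (q ^ card S) Bs \<rho>) = \<rho>"
      if "density d \<rho>" for \<rho>
      using recovers[OF that] by (simp add: Bs_eq)
    fix \<rho> \<rho>' a b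
    assume dens: "density d \<rho>" "density d \<rho>'" and ab: "a < q ^ card S'" "b < q ^ card S'"
    show "(\<Sum>y<q ^ (card S - card S'). apply_channel d (q ^ card S) Bs \<rho>
          ((\<lambda>(a,y). merge_idx q (card S) S' a y) (a, y)) ((\<lambda>(a,y). merge_idx q (card S) S' a y) (b, y))) =
        (\<Sum>y<q ^ (card S - card S'). apply_channel d (q ^ card S) Bs \<rho>'
          ((\<lambda>(a,y). merge_idx q (card S) S' a y) (a, y)) ((\<lambda>(a,y). merge_idx q (card S) S' a y) (b, y)))"
      using ptrace_Int_marginal[OF q S Zq, folded S'_def, OF ab] blind[OF dens]
      by (simp add: Bs_eq[symmetric])
  qed (use d Rs in auto)
  then have "d \<le> q ^ (card S - card S')"
    by (rule blind_part_recovery.d_le_dY)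
  also have "card S - card S' = card (S - Zq)"
    using card_rank_in_image[of S "S \<inter> Zq"] fS unfolding S'_def by (simp add: card_Diff_subset_Int)
  finally show ?thesis .
qed

lemma recoverable_no_info_card_Diff:
  assumes q: "2 \<le> q"
    and S: "S \<subseteq> {..<total_qudits n w}" and Zq: "Zq \<subseteq> {..<total_qudits n w}"
    and "recoverable q n m w Ks S" and "no_info q n m w Ks Zq"
  shows "m \<le> card (S - Zq)"
proof -
  obtain Rs where Rs: "is_channel (q ^ card S) (q ^ m) Rs"
    and recovers: "\<And>\<rho>. density (q ^ m) \<rho> \<Longrightarrow> apply_channel (q ^ card S) (q ^ m) Rs
      (ptrace q (total_qudits n w) S (apply_channel (q ^ m) (q ^ total_qudits n w) Ks \<rho>)) = \<rho>"
    using assms(4) unfolding recoverable_def by blast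
  have blind: "\<And>\<rho> \<sigma>. density (q ^ m) \<rho> \<Longrightarrow> density (q ^ m) \<sigma> \<Longrightarrow>
      ptrace q (total_qudits n w) Zq (apply_channel (q ^ m) (q ^ total_qudits n w) Ks \<rho>) =
      ptrace q (total_qudits n w) Zq (apply_channel (q ^ m) (q ^ total_qudits n w) Ks \<sigma>)"
    using assms(5) unfolding no_info_def by blast
  have "q ^ m \<le> q ^ card (S - Zq)"
    using q recovery_dim_le_card_Diff[OF _ _ S Zq Rs recovers blind] by simp
  then show ?thesis using q by (simp add: power_le_imp_le_exp)
qed

lemma secret_le_qudits_outside:
  assumes q: "2 \<le> q" and qss: "qss_scheme t n z q m w Ks"
    and A: "A \<subseteq> {1..n}" and T: "\<forall>j\<in>A. T j \<subseteq> share_block w j"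
    and rec: "recoverable q n m w Ks (\<Union>j\<in>A. T j)"
    and Z: "Z \<subseteq> A" "card Z \<le> z"
  shows "m \<le> (\<Sum>j\<in>A - Z. card (T j))"
proof -
  have fA: "finite A" using A finite_subset by blast
  have fT: "finite (T j)" if "j \<in> A" for j
    using T that finite_subset[of "T j" "share_block w j"] by (simp add: share_block_def)
  have "no_info q n m w Ks (qudits_of w Z)"
    using qss Z A unfolding qss_scheme_def unauthorized_def by auto
  moreover have "(\<Union>j\<in>A. T j) \<subseteq> {..<total_qudits n w}"
    using T A share_block_subset by blast
  ultimately have "m \<le> card ((\<Union>j\<in>A. T j) - qudits_of w Z)"
    using recoverable_no_info_card_Diff[OF q _ qudits_of_subset rec] Z A by blast
  also have "\<dots> \<le> card (\<Union>j\<in>A - Z. T j)"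
  proof (rule card_mono)
    show "finite (\<Union>j\<in>A - Z. T j)" using fA fT by blast
    show "(\<Union>j\<in>A. T j) - qudits_of w Z \<subseteq> (\<Union>j\<in>A - Z. T j)"
      unfolding qudits_of_def using T by blast
  qed
  also have "\<dots> \<le> (\<Sum>j\<in>A - Z. card (T j))"
    using fA by (intro card_UN_le) simp
  finally show ?thesis .
qed

lemma sum_subsets_sum_Diff:
  fixes h :: "'a \<Rightarrow> 'b::comm_semiring_1"
  assumes fA: "finite A"
  shows "(\<Sum>Z | Z \<subseteq> A \<and> card Z = k. \<Sum>j\<in>A - Z. h j) = of_nat ((card A - 1) choose k) * (\<Sum>j\<in>A. h j)"
proof -
  let ?Zs = "{Z. Z \<subseteq> A \<and> card Z = k}"
  have fZs: "finite ?Zs" using fA by simp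
  have avoid: "card {Z \<in> ?Zs. j \<notin> Z} = (card A - 1) choose k" if "j \<in> A" for j
  proof -
    have "{Z \<in> ?Zs. j \<notin> Z} = {Z. Z \<subseteq> A - {j} \<and> card Z = k}" by auto
    then show ?thesis using n_subsets[of "A - {j}" k] fA that by simp
  qed
  have "(\<Sum>Z\<in>?Zs. \<Sum>j\<in>A - Z. h j) = (\<Sum>Z\<in>?Zs. \<Sum>j\<in>A. if j \<notin> Z then h j else 0)"
    using fA by (intro sum.cong[OF refl]) (simp add: sum.inter_filter[symmetric] set_diff_eq)
  also have "\<dots> = (\<Sum>j\<in>A. \<Sum>Z\<in>?Zs. if j \<notin> Z then h j else 0)"
    by (rule sum.swap)
  also have "\<dots> = (\<Sum>j\<in>A. of_nat (card {Z \<in> ?Zs. j \<notin> Z}) * h j)"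
    using fZs by (intro sum.cong[OF refl]) (simp add: sum.inter_filter[symmetric])
  also have "\<dots> = of_nat ((card A - 1) choose k) * (\<Sum>j\<in>A. h j)"
    using avoid by (simp add: sum_distrib_left)
  finally show ?thesis .
qed

text \<open>Each \<open>j \<in> A\<close> avoids \<open>(|A| - 1 choose z)\<close> of the \<open>(|A| choose z)\<close> subsets \<open>Z\<close>, and
\<open>(|A| - z) * (|A| choose z) = |A| * (|A| - 1 choose z)\<close>.\<close>

lemma averaging_over_subsets:
  fixes h :: "'a \<Rightarrow> nat"
  assumes fA: "finite A" and z: "z < card A"
    and bound: "\<And>Z. Z \<subseteq> A \<Longrightarrow> card Z = z \<Longrightarrow> m \<le> (\<Sum>j\<in>A - Z. h j)"
  shows "card A * m \<le> (card A - z) * (\<Sum>j\<in>A. h j)"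
proof -
  define a where "a = card A"
  have "(a choose z) * m = (\<Sum>Z | Z \<subseteq> A \<and> card Z = z. m)"
    using n_subsets[OF fA] by (simp add: a_def)
  also have "\<dots> \<le> (\<Sum>Z | Z \<subseteq> A \<and> card Z = z. \<Sum>j\<in>A - Z. h j)"
    by (intro sum_mono) (simp add: bound)
  also have "\<dots> = ((a - 1) choose z) * (\<Sum>j\<in>A. h j)"
    unfolding a_def using sum_subsets_sum_Diff[OF fA, where k = z and h = h] by simp
  finally have "(a - z) * ((a choose z) * m) \<le> (a - z) * (((a - 1) choose z) * (\<Sum>j\<in>A. h j))"
    by simp
  moreover have "(a - z) * ((a choose z) * m) = ((a - 1) choose z) * (a * m)"
    by (metis binomial_absorb_comp mult.assoc mult.commute)
  moreover have "(a - z) * (((a - 1) choose z) * (\<Sum>j\<in>A. h j)) =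
      ((a - 1) choose z) * ((a - z) * (\<Sum>j\<in>A. h j))"
    by (simp only: mult_ac)
  ultimately have "((a - 1) choose z) * (a * m) \<le> ((a - 1) choose z) * ((a - z) * (\<Sum>j\<in>A. h j))"
    by metis
  moreover have "0 < (a - 1) choose z" using z a_def by simp
  ultimately show ?thesis unfolding a_def by simp
qed

theorem theorem5:
  fixes t n z q m :: nat and w :: "nat \<Rightarrow> nat" and Ks :: "cmat list"
    and A :: "nat set" and T :: "nat \<Rightarrow> nat set"
  assumes "z < t" and "t \<le> n" and "2 \<le> q"
    and "qss_scheme t n z q m w Ks"
    and "A \<subseteq> {1..n}" and "authorized q n m w Ks A"
    and "\<forall>j\<in>A. T j \<subseteq> share_block w j"
    and "recoverable q n m w Ks (\<Union>j\<in>A. T j)"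
  shows "real (\<Sum>j\<in>A. card (T j)) \<ge> real (card A) * real m / (real (card A) - real z)"
proof (cases "z < card A")
  case True
  have "finite A" using assms(5) finite_subset by blast
  then have "card A * m \<le> (card A - z) * (\<Sum>j\<in>A. card (T j))"
    using averaging_over_subsets[OF _ True] secret_le_qudits_outside[OF assms(3,4,5,7,8)] by blast
  then have "real (card A) * real m \<le> (real (card A) - real z) * real (\<Sum>j\<in>A. card (T j))"
    using True by (metis less_imp_le of_nat_diff of_nat_le_iff of_nat_mult)
  then show ?thesis using True by (simp add: pos_divide_le_eq mult.commute)
next
  case False
  then have "real (card A) * real m / (real (card A) - real z) \<le> 0"
    by (simp add: divide_nonneg_nonpos)
  then show ?thesis by (rule order_trans) (simp add: sum_nonneg)
qed

end
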